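(* Let $M\ge1$ and $q\in[q_G,M+1]$. The sequence $\alpha(q)$ is irreducible if and only if $q\notin(q_L(\mathbf b),q_R(\mathbf b)]$ for every fundamental word $\mathbf b\in\mathcal A_M$.
   Context: Order and word operations. $\Omega_M=\{0,\dots,M\}^{\mathbb N}$, with lexicographic order; words are compared via $\mathbf c\prec\mathbf d$ iff $\mathbf c0^\infty\prec\mathbf d0^\infty$. $\sigma$ is the left shift. For a word $c_1\dots c_k$: - if $c_k<M$, then $c_1\dots c_k^+=c_1\dots c_{k-1}(c_k+1)$; - if $c_k>0$, then $c_1\dots c_k^-=c_1\dots c_{k-1}(c_k-1)$; - $\overline{c_1\dots c_k}=(M-c_1)\dots(M-c_k)$, and $\overline{(c_i)}=(M-c_i)$ for sequences. Quasi-greedy expansion. For $q\in(1,M+1]$, $\alpha(q)$ is the lexicographically largest $(a_i)\in\Omega_M$ not ending in $0^\infty$ with $\sum a_iq^{-i}=1$. Irreducible sequences. Let $\mathbf V=\{(c_i)\in\Omega_M:\overline{(c_i)}\preceq\sigma^n((c_i))\preceq(c_i)\ \forall n\ge0\}$. A sequence $(a_i)\in\mathbf V$ is irreducible if for every $j\in\mathbb N$: whenever $a_j>0$ and $(a_1\dots a_j^-)^\infty\in\mathbf V$, we have $a_1\dots a_j(\overline{a_1\dots a_j}^+)^\infty\prec(a_i)$. (In particular, an irreducible sequence lies in $\mathbf V$.) Fundamental words. A word $a_1\dots a_m$ ($m\ge2$) is fundamental if $\overline{a_1\dots a_{m-i}}\preceq a_{i+1}\dots a_m\prec a_1\dots a_{m-i}$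 for $1\le i<m$. When $M\ge2$, a letter $a_1$ is fundamental if $M-a_1\le a_1<M$. $\mathcal A_M$ denotes the set of fundamental words. For $\mathbf b\in\mathcal A_M$, $q_L(\mathbf b),q_R(\mathbf b)$ are given by $\alpha(q_L(\mathbf b))=\mathbf b^\infty$ and $\alpha(q_R(\mathbf b))=\mathbf b^+(\overline{\mathbf b})^\infty$. The base $q_G$. It is defined by $\alpha(q_G)=k^\infty$ if $M=2k$, and $\alpha(q_G)=((k+1)k)^\infty$ if $M=2k+1$. *)

theory Defs
  imports Complex_Main
begin

text \<open>Conventions: a sequence (c_i)_{i>=1} in Omega_M is a function c :: nat => nat with
  c 0 = c_1, c 1 = c_2, ...; a word c_1...c_k is a list [c_1,...,c_k].\<close>

definition seqs :: "nat \<Rightarrow> (nat \<Rightarrow> nat) set" where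
  "seqs M = {c. \<forall>i. c i \<le> M}"

definition lex_less :: "(nat \<Rightarrow> nat) \<Rightarrow> (nat \<Rightarrow> nat) \<Rightarrow> bool" where
  "lex_less c d \<longleftrightarrow> (\<exists>n. (\<forall>i<n. c i = d i) \<and> c n < d n)"

definition lex_le :: "(nat \<Rightarrow> nat) \<Rightarrow> (nat \<Rightarrow> nat) \<Rightarrow> bool" where
  "lex_le c d \<longleftrightarrow> lex_less c d \<or> c = d"

definition ext0 :: "nat list \<Rightarrow> nat \<Rightarrow> nat" where
  "ext0 w = (\<lambda>i. if i < length w then w ! i else 0)"

definition wlex_less :: "nat list \<Rightarrow> nat list \<Rightarrow> bool" where
  "wlex_less u v \<longleftrightarrow> lex_less (ext0 u) (ext0 v)"

definition wlex_le :: "nat list \<Rightarrow> nat list \<Rightarrow> bool" where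
  "wlex_le u v \<longleftrightarrow> lex_le (ext0 u) (ext0 v)"

definition shift :: "nat \<Rightarrow> (nat \<Rightarrow> nat) \<Rightarrow> nat \<Rightarrow> nat" where
  "shift n c = (\<lambda>i. c (i + n))"

text \<open>periodic sequence w^infinity (w nonempty)\<close>
definition per :: "nat list \<Rightarrow> nat \<Rightarrow> nat" where
  "per w = (\<lambda>i. w ! (i mod length w))"

definition wapp :: "nat list \<Rightarrow> (nat \<Rightarrow> nat) \<Rightarrow> nat \<Rightarrow> nat" where
  "wapp w s = (\<lambda>i. if i < length w then w ! i else s (i - length w))"

definition pref :: "(nat \<Rightarrow> nat) \<Rightarrow> nat \<Rightarrow> nat list" where
  "pref a j = map a [0..<j]"

definition wplus :: "nat list \<Rightarrow> nat list" where
  "wplus w = butlast w @ [last w + 1]"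

definition wminus :: "nat list \<Rightarrow> nat list" where
  "wminus w = butlast w @ [last w - 1]"

definition wbar :: "nat \<Rightarrow> nat list \<Rightarrow> nat list" where
  "wbar M w = map (\<lambda>x. M - x) w"

definition sbar :: "nat \<Rightarrow> (nat \<Rightarrow> nat) \<Rightarrow> nat \<Rightarrow> nat" where
  "sbar M c = (\<lambda>i. M - c i)"

definition is_qg_exp :: "nat \<Rightarrow> real \<Rightarrow> (nat \<Rightarrow> nat) \<Rightarrow> bool" where
  "is_qg_exp M q a \<longleftrightarrow> a \<in> seqs M \<and> (\<forall>n. \<exists>i\<ge>n. a i \<noteq> 0)
     \<and> ((\<lambda>i. real (a i) / q ^ Suc i) sums 1)"

definition alpha :: "nat \<Rightarrow> real \<Rightarrow> nat \<Rightarrow> nat" where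
  "alpha M q = (THE a. is_qg_exp M q a \<and> (\<forall>b. is_qg_exp M q b \<longrightarrow> lex_le b a))"

definition V :: "nat \<Rightarrow> (nat \<Rightarrow> nat) set" where
  "V M = {c \<in> seqs M. \<forall>n. lex_le (sbar M c) (shift n c) \<and> lex_le (shift n c) c}"

definition irreducible_seq :: "nat \<Rightarrow> (nat \<Rightarrow> nat) \<Rightarrow> bool" where
  "irreducible_seq M a \<longleftrightarrow> a \<in> V M \<and>
     (\<forall>j\<ge>1. a (j - 1) > 0 \<and> per (wminus (pref a j)) \<in> V M \<longrightarrow>
        lex_less (wapp (pref a j) (per (wplus (wbar M (pref a j))))) a)"

definition fundamental :: "nat \<Rightarrow> nat list set" where
  "fundamental M = {w. set w \<subseteq> {0..M} \<and>
     ((length w \<ge> 2 \<and> (\<forall>i. 1 \<le> i \<and> i < length w \<longrightarrow>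
          wlex_le (wbar M (take (length w - i) w)) (drop i w) \<and>
          wlex_less (drop i w) (take (length w - i) w)))
      \<or> (M \<ge> 2 \<and> length w = 1 \<and> M - hd w \<le> hd w \<and> hd w < M))}"

definition qL :: "nat \<Rightarrow> nat list \<Rightarrow> real" where
  "qL M b = (THE q. 1 < q \<and> q \<le> real M + 1 \<and> alpha M q = per b)"

definition qR :: "nat \<Rightarrow> nat list \<Rightarrow> real" where
  "qR M b = (THE q. 1 < q \<and> q \<le> real M + 1 \<and>
                 alpha M q = wapp (wplus b) (per (wbar M b)))"

definition qG :: "nat \<Rightarrow> real" where
  "qG M = (THE q. 1 < q \<and> q \<le> real M + 1 \<and>
     alpha M q = (if even M then per [M div 2] else per [M div 2 + 1, M div 2]))"

end

theory Submission
  imports Defs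
begin

(* Write a = alpha q. By Parry's criterion the quasi-greedy expansions are exactly the
   shift-maximal sequences (sigma^n a <= a for all n) with a_1 > 0 not ending in 0^infinity,
   and alpha is strictly increasing in q. Hence q > qL b iff b^infinity < a,
   q <= qR b iff a <= b^+ (bar b)^infinity, and q >= qG iff a >= alpha qG, which turns the
   theorem into a statement about shift-maximal sequences.

   If a lies in the interval of a fundamental word b, then a begins with b^+; for j = |b| the
   word (a_1 ... a_j)^- is b itself and a_1 ... a_j (bar(a_1 ... a_j)^+)^infinity equals
   b^+ (bar b)^infinity >= a, so a is not irreducible. Conversely, if a is not irreducible,
   choose j as the least n with sigma^n a < bar a when a is not in V, and as an index where
   the irreducibility condition fails otherwise. Shift-maximality of a yields the strict
   inequalities of a fundamental word for (a_1 ... a_j)^-, the choice of j yields the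
   reflected ones, and a lies in the interval of this word. *)

section \<open>Lexicographic order on sequences\<close>

lemma lex_lessI: "(\<And>i. i < k \<Longrightarrow> x i = y i) \<Longrightarrow> x k < y k \<Longrightarrow> lex_less x y"
  unfolding lex_less_def by blast

lemma lex_lessE:
  assumes "lex_less x y"
  obtains k where "\<And>i. i < k \<Longrightarrow> x i = y i" "x k < y k"
  using assms that unfolding lex_less_def by auto

lemma lex_less_irrefl: "\<not> lex_less x x"
  by (auto elim: lex_lessE)

lemma lex_less_trans:
  assumes "lex_less x y" "lex_less y z"
  shows "lex_less x z"
proof -
  obtain k where k: "\<And>i. i < k \<Longrightarrow> x i = y i" "x k < y k"
    using assms(1) by (elim lex_lessE) blast
  obtain l where l: "\<And>i. i < l \<Longrightarrow> y i = z i" "y l < z l"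
    using assms(2) by (elim lex_lessE) blast
  show ?thesis
  proof (rule lex_lessI)
    show "x i = z i" if "i < min k l" for i
      using k(1) l(1) that by simp
    show "x (min k l) < z (min k l)"
      using k l by (cases k l rule: linorder_cases) auto
  qed
qed

lemma lex_less_linear: "lex_less x y \<or> x = y \<or> lex_less y x"
proof (cases "x = y")
  case False
  then obtain k where "x k \<noteq> y k"
    by auto
  define n where "n = (LEAST k. x k \<noteq> y k)"
  have "x n \<noteq> y n"
    unfolding n_def by (rule LeastI[of _ k]) fact
  moreover have "\<And>i. i < n \<Longrightarrow> x i = y i"
    unfolding n_def using not_less_Least by blast
  ultimately show ?thesis
    by (metis lex_lessI linorder_neqE_nat)
qed simp

lemma lex_less_asym: "lex_less x y \<Longrightarrow> \<not> lex_less y x"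
  by (metis lex_less_irrefl lex_less_trans)

interpretation lex: linorder lex_le lex_less
proof unfold_locales
  fix x y z :: "nat \<Rightarrow> nat"
  show "lex_less x y \<longleftrightarrow> lex_le x y \<and> \<not> lex_le y x"
    unfolding lex_le_def using lex_less_asym lex_less_irrefl by auto
  show "lex_le x x"
    unfolding lex_le_def by simp
  show "lex_le x y \<Longrightarrow> lex_le y z \<Longrightarrow> lex_le x z"
    unfolding lex_le_def using lex_less_trans[of x y z] by auto
  show "lex_le x y \<Longrightarrow> lex_le y x \<Longrightarrow> x = y"
    unfolding lex_le_def using lex_less_asym by auto
  show "lex_le x y \<or> lex_le y x"
    unfolding lex_le_def using lex_less_linear by auto
qed

lemma lex_le_iff_nth: "lex_le x y \<longleftrightarrow> (\<forall>k. (\<forall>i<k. x i = y i) \<longrightarrow> x k \<le> y k)"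
proof
  assume "lex_le x y"
  show "\<forall>k. (\<forall>i<k. x i = y i) \<longrightarrow> x k \<le> y k"
  proof (intro allI impI)
    fix k assume "\<forall>i<k. x i = y i"
    show "x k \<le> y k"
    proof (rule ccontr)
      assume "\<not> x k \<le> y k"
      with \<open>\<forall>i<k. x i = y i\<close> have "lex_less y x"
        by (intro lex_lessI[of k]) auto
      with \<open>lex_le x y\<close> show False
        by simp
    qed
  qed
next
  assume nth_le: "\<forall>k. (\<forall>i<k. x i = y i) \<longrightarrow> x k \<le> y k"
  show "lex_le x y"
    unfolding lex.not_less[symmetric]
  proof
    assume "lex_less y x"
    then show False
      using nth_le by (elim lex_lessE) (metis not_le)
  qed
qed

lemma lex_le_nth_le: "lex_le x y \<Longrightarrow> (\<And>i. i < k \<Longrightarrow> x i = y i) \<Longrightarrow> x k \<le> y k"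
  unfolding lex_le_iff_nth by blast

lemma shift_apply [simp]: "shift n x i = x (i + n)"
  unfolding shift_def ..

lemma shift_0 [simp]: "shift 0 x = x"
  unfolding shift_def by simp

lemma shift_shift [simp]: "shift m (shift n x) = shift (n + m) x"
  unfolding shift_def by (simp add: ac_simps)

lemma sbar_apply [simp]: "sbar M x i = M - x i"
  unfolding sbar_def ..

lemma shift_sbar: "shift n (sbar M x) = sbar M (shift n x)"
  by (simp add: fun_eq_iff)

lemma seqsD: "x \<in> seqs M \<Longrightarrow> x i \<le> M"
  unfolding seqs_def by blast

lemma shift_in_seqs: "x \<in> seqs M \<Longrightarrow> shift n x \<in> seqs M"
  unfolding seqs_def by auto

lemma sbar_in_seqs: "sbar M x \<in> seqs M"
  unfolding seqs_def by auto

lemma sbar_sbar: "x \<in> seqs M \<Longrightarrow> sbar M (sbar M x) = x"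
  by (simp add: fun_eq_iff seqsD)

lemma lex_less_sbar_iff:
  assumes "x \<in> seqs M" "y \<in> seqs M"
  shows "lex_less (sbar M x) (sbar M y) \<longleftrightarrow> lex_less y x"
proof -
  have "M - x i = M - y i \<longleftrightarrow> y i = x i" "M - x i < M - y i \<longleftrightarrow> y i < x i" for i
    using seqsD[OF assms(1), of i] seqsD[OF assms(2), of i] by auto
  then show ?thesis
    unfolding lex_less_def by simp
qed

lemma lex_le_sbar_iff:
  "x \<in> seqs M \<Longrightarrow> y \<in> seqs M \<Longrightarrow> lex_le (sbar M x) (sbar M y) \<longleftrightarrow> lex_le y x"
  by (simp add: lex.not_less[symmetric] lex_less_sbar_iff)

lemma lex_less_shift_iff:
  assumes "\<And>i. i < k \<Longrightarrow> x i = y i"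
  shows "lex_less (shift k x) (shift k y) \<longleftrightarrow> lex_less x y"
proof
  assume "lex_less (shift k x) (shift k y)"
  then obtain n where n: "\<And>i. i < n \<Longrightarrow> x (i + k) = y (i + k)" "x (n + k) < y (n + k)"
    by (elim lex_lessE) auto
  then show "lex_less x y"
  proof (intro lex_lessI[of "n + k"])
    fix i assume "i < n + k"
    then show "x i = y i"
      using assms n(1)[of "i - k"] by (cases "i < k") auto
  qed (rule n(2))
next
  assume "lex_less x y"
  then obtain n where n: "\<And>i. i < n \<Longrightarrow> x i = y i" "x n < y n"
    by (elim lex_lessE) blast
  with assms have "k \<le> n"
    by (metis not_le less_irrefl)
  with n show "lex_less (shift k x) (shift k y)"
    by (intro lex_lessI[of "n - k"]) auto
qed

lemma lex_le_shift_iff: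
  "(\<And>i. i < k \<Longrightarrow> x i = y i) \<Longrightarrow> lex_le (shift k x) (shift k y) \<longleftrightarrow> lex_le x y"
  by (simp add: lex.not_less[symmetric] lex_less_shift_iff)

lemma lex_less_of_le_raised:
  assumes "lex_le x y" "\<forall>i<L. y' i = y i" "y L < y' L"
  shows "lex_less x y'"
proof (cases "\<forall>i<L. x i = y i")
  case True
  then show ?thesis
    using assms lex_le_nth_le[OF assms(1), of L] by (intro lex_lessI[of L]) auto
next
  case False
  then have "lex_less x y"
    using assms(1) unfolding lex_le_def by auto
  then obtain k where k: "\<And>i. i < k \<Longrightarrow> x i = y i" "x k < y k"
    by (elim lex_lessE) blast
  with False have "k < L"
    by (meson not_le less_le_trans)
  with k assms(2) show ?thesis
    by (intro lex_lessI[of k]) auto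
qed

definition trunc :: "nat \<Rightarrow> (nat \<Rightarrow> nat) \<Rightarrow> nat \<Rightarrow> nat" where
  "trunc L x = (\<lambda>i. if i < L then x i else 0)"

lemma trunc_eq_iff: "trunc L x = trunc L y \<longleftrightarrow> (\<forall>i<L. x i = y i)"
  unfolding trunc_def fun_eq_iff by auto

lemma lex_less_trunc_iff:
  "lex_less (trunc L x) (trunc L y) \<longleftrightarrow> (\<exists>k<L. (\<forall>i<k. x i = y i) \<and> x k < y k)"
proof
  assume "lex_less (trunc L x) (trunc L y)"
  then obtain k where k: "\<And>i. i < k \<Longrightarrow> trunc L x i = trunc L y i" "trunc L x k < trunc L y k"
    by (elim lex_lessE) blast
  then have "k < L"
    by (auto simp: trunc_def split: if_splits)
  with k show "\<exists>k<L. (\<forall>i<k. x i = y i) \<and> x k < y k"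
    by (auto simp: trunc_def)
next
  assume "\<exists>k<L. (\<forall>i<k. x i = y i) \<and> x k < y k"
  then obtain k where "k < L" "\<forall>i<k. x i = y i" "x k < y k"
    by blast
  then show "lex_less (trunc L x) (trunc L y)"
    by (intro lex_lessI[of k]) (auto simp: trunc_def)
qed

lemma lex_less_of_trunc: "lex_less (trunc L x) (trunc L y) \<Longrightarrow> lex_less x y"
  unfolding lex_less_trunc_iff by (auto intro: lex_lessI)

lemma lex_le_trunc:
  assumes "lex_le x y"
  shows "lex_le (trunc L x) (trunc L y)"
  unfolding lex_le_iff_nth
proof (intro allI impI)
  fix k assume "\<forall>i<k. trunc L x i = trunc L y i"
  then have "k < L \<Longrightarrow> x i = y i" if "i < k" for i
    using that by (auto simp: trunc_def)
  then show "trunc L x k \<le> trunc L y k"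
    using lex_le_nth_le[OF assms, of k] by (simp add: trunc_def)
qed

lemma lex_less_trunc_sbar_iff:
  assumes "x \<in> seqs M" "y \<in> seqs M"
  shows "lex_less (trunc L (sbar M x)) (trunc L (sbar M y)) \<longleftrightarrow> lex_less (trunc L y) (trunc L x)"
proof -
  have "M - x i = M - y i \<longleftrightarrow> y i = x i" "M - x i < M - y i \<longleftrightarrow> y i < x i" for i
    using seqsD[OF assms(1), of i] seqsD[OF assms(2), of i] by auto
  then show ?thesis
    unfolding lex_less_trunc_iff by simp
qed

lemma lex_le_trunc_sbar_iff:
  "x \<in> seqs M \<Longrightarrow> y \<in> seqs M \<Longrightarrow>
    lex_le (trunc L (sbar M x)) (trunc L (sbar M y)) \<longleftrightarrow> lex_le (trunc L y) (trunc L x)"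
  by (simp add: lex.not_less[symmetric] lex_less_trunc_sbar_iff)

lemma lex_le_trunc_sbar_swap:
  "x \<in> seqs M \<Longrightarrow> y \<in> seqs M \<Longrightarrow>
    lex_le (trunc L (sbar M x)) (trunc L y) \<longleftrightarrow> lex_le (trunc L (sbar M y)) (trunc L x)"
  using lex_le_trunc_sbar_iff[of x M "sbar M y" L] by (simp add: sbar_in_seqs sbar_sbar)

lemma lex_le_trunc_shift_iff:
  assumes "\<forall>i<W. x i = y i" "W \<le> L"
  shows "lex_le (trunc L x) (trunc L y) \<longleftrightarrow>
    lex_le (trunc (L - W) (shift W x)) (trunc (L - W) (shift W y))"
proof -
  have "shift W (trunc L z) = trunc (L - W) (shift W z)" for z
    using assms(2) by (auto simp: trunc_def fun_eq_iff)
  moreover have "\<forall>i<W. trunc L x i = trunc L y i"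
    using assms by (simp add: trunc_def)
  ultimately show ?thesis
    using lex_le_shift_iff[of W "trunc L x" "trunc L y"] by simp
qed

lemma lex_le_iff_trunc: "lex_le x y \<longleftrightarrow> (\<forall>L. lex_le (trunc L x) (trunc L y))"
proof (intro iffI allI)
  assume "\<forall>L. lex_le (trunc L x) (trunc L y)"
  show "lex_le x y"
    unfolding lex.not_less[symmetric]
  proof
    assume "lex_less y x"
    then obtain k where "\<And>i. i < k \<Longrightarrow> y i = x i" "y k < x k"
      by (elim lex_lessE) blast
    then have "lex_less (trunc (Suc k) y) (trunc (Suc k) x)"
      unfolding lex_less_trunc_iff by blast
    with \<open>\<forall>L. lex_le (trunc L x) (trunc L y)\<close> show False
      by (simp add: lex.not_less[symmetric])
  qed
qed (rule lex_le_trunc)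

(* For words of equal length: u < v implies u <= v^-. *)
lemma lex_le_trunc_decrement_last:
  assumes "lex_less (trunc L x) (trunc L y)" "\<forall>i<L - 1. y' i = y i" "y (L - 1) \<le> Suc (y' (L - 1))"
  shows "lex_le (trunc L x) (trunc L y')"
proof -
  obtain k where k: "k < L" "\<forall>i<k. x i = y i" "x k < y k"
    using assms(1) unfolding lex_less_trunc_iff by blast
  show ?thesis
  proof (cases "k < L - 1")
    case True
    with k assms(2) have "lex_less (trunc L x) (trunc L y')"
      unfolding lex_less_trunc_iff by auto
    then show ?thesis
      by (rule lex.less_imp_le)
  next
    case False
    with k have last: "k = L - 1"
      by linarith
    with k assms(2,3) have agree: "\<forall>i<L - 1. x i = y' i" and "x (L - 1) \<le> y' (L - 1)"
      by auto
    then consider "x (L - 1) < y' (L - 1)" | "x (L - 1) = y' (L - 1)"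
      by linarith
    then show ?thesis
    proof cases
      case 1
      with agree k(1) have "lex_less (trunc L x) (trunc L y')"
        unfolding lex_less_trunc_iff by (intro exI[of _ "L - 1"]) auto
      then show ?thesis
        by (rule lex.less_imp_le)
    next
      case 2
      with agree have "trunc L x = trunc L y'"
        unfolding trunc_eq_iff by (metis less_SucE Suc_pred' k(1) gr_zeroI not_less0)
      then show ?thesis
        by (rule lex.eq_refl)
    qed
  qed
qed

section \<open>Words\<close>

lemma ext0_eq_trunc: "ext0 w = trunc (length w) ((!) w)"
  unfolding ext0_def trunc_def ..

lemma per_nth: "i < length w \<Longrightarrow> per w i = w ! i"
  unfolding per_def by simp

lemma shift_per_mod: "shift n (per w) = shift (n mod length w) (per w)"
  unfolding per_def by (simp add: fun_eq_iff mod_add_right_eq)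

lemma per_add_mult: "per w (i + length w * k) = per w i"
  unfolding per_def by simp

lemma per_singleton: "per [x] i = x"
  unfolding per_def by simp

lemma per_two: "per [x, y] i = (if even i then x else y)"
proof -
  have "length [x, y] = 2" "i mod 2 = (if even i then 0 else 1)"
    by simp presburger
  then show ?thesis
    unfolding per_def by (simp only:) simp
qed

lemma wapp_apply: "wapp w s i = (if i < length w then w ! i else s (i - length w))"
  unfolding wapp_def ..

lemma length_wplus [simp]: "w \<noteq> [] \<Longrightarrow> length (wplus w) = length w"
  unfolding wplus_def by simp

lemma length_wminus [simp]: "w \<noteq> [] \<Longrightarrow> length (wminus w) = length w"
  unfolding wminus_def by simp

lemma wminus_not_Nil [simp]: "wminus w \<noteq> []"
  unfolding wminus_def by simp

lemma length_wbar [simp]: "length (wbar M w) = length w"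
  unfolding wbar_def by simp

lemma wbar_nth: "i < length w \<Longrightarrow> wbar M w ! i = M - w ! i"
  unfolding wbar_def by simp

lemma wplus_nth:
  "w \<noteq> [] \<Longrightarrow> i < length w \<Longrightarrow> wplus w ! i = (if i = length w - 1 then w ! i + 1 else w ! i)"
  unfolding wplus_def by (auto simp: nth_append nth_butlast last_conv_nth)

lemma wminus_nth:
  "w \<noteq> [] \<Longrightarrow> i < length w \<Longrightarrow> wminus w ! i = (if i = length w - 1 then w ! i - 1 else w ! i)"
  unfolding wminus_def by (auto simp: nth_append nth_butlast last_conv_nth)

lemma wminus_wplus: "w \<noteq> [] \<Longrightarrow> wminus (wplus w) = w"
  unfolding wminus_def wplus_def by simp

lemma wplus_wminus: "w \<noteq> [] \<Longrightarrow> 0 < last w \<Longrightarrow> wplus (wminus w) = w"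
  unfolding wminus_def wplus_def by simp

lemma wplus_wbar_wplus:
  assumes "w \<noteq> []" "last w < M"
  shows "wplus (wbar M (wplus w)) = wbar M w"
proof -
  have "wbar M (wplus w) = butlast (wbar M w) @ [M - (last w + 1)]"
    unfolding wplus_def wbar_def by (simp add: map_butlast)
  moreover have "wbar M w = butlast (wbar M w) @ [M - last w]"
    using assms(1) unfolding wbar_def by (metis append_butlast_last_id last_map list.map_disc_iff map_butlast)
  ultimately show ?thesis
    unfolding wplus_def using assms by (metis Suc_diff_Suc Suc_eq_plus1 butlast_snoc last_snoc)
qed

lemma length_pref [simp]: "length (pref a j) = j"
  unfolding pref_def by simp

lemma pref_nth [simp]: "i < j \<Longrightarrow> pref a j ! i = a i"
  unfolding pref_def by simp

lemma pref_eq_Nil_iff [simp]: "pref a j = [] \<longleftrightarrow> j = 0"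
  unfolding pref_def by simp

section \<open>Fundamental words\<close>

lemma Nil_not_fundamental: "[] \<notin> fundamental M"
  unfolding fundamental_def by simp

lemma fundamental_singleton_iff: "[c] \<in> fundamental M \<longleftrightarrow> M - c \<le> c \<and> c < M"
  unfolding fundamental_def by auto

lemma fundamental_iff:
  assumes "2 \<le> length b"
  shows "b \<in> fundamental M \<longleftrightarrow> set b \<subseteq> {0..M} \<and>
    (\<forall>i\<in>{1..<length b}.
      lex_less (trunc (length b - i) (shift i (per b))) (trunc (length b - i) (per b)) \<and>
      lex_le (trunc (length b - i) (sbar M (per b))) (trunc (length b - i) (shift i (per b))))"
proof -
  have "ext0 (drop i b) = trunc (length b - i) (shift i (per b))"
    "ext0 (take (length b - i) b) = trunc (length b - i) (per b)"
    "ext0 (wbar M (take (length b - i) b)) = trunc (length b - i) (sbar M (per b))" for i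
    by (simp_all add: ext0_eq_trunc trunc_eq_iff per_nth wbar_nth add.commute)
  with assms show ?thesis
    unfolding fundamental_def wlex_less_def wlex_le_def by auto
qed

lemma fundamental_nth_le: "b \<in> fundamental M \<Longrightarrow> i < length b \<Longrightarrow> b ! i \<le> M"
  unfolding fundamental_def by (auto dest: nth_mem)

lemma fundamental_not_Nil: "b \<in> fundamental M \<Longrightarrow> b \<noteq> []"
  using Nil_not_fundamental by blast

lemma fundamental_cases:
  assumes "b \<in> fundamental M"
  obtains c where "b = [c]" "M - c \<le> c" "c < M" | "2 \<le> length b"
  using assms fundamental_not_Nil[OF assms] fundamental_singleton_iff
  by (cases b; cases "tl b") auto

lemma fundamental_upper_window:
  assumes "b \<in> fundamental M" "0 < i" "i < length b"
  shows "lex_less (trunc (length b - i) (shift i (per b))) (trunc (length b - i) (per b))"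
  using assms fundamental_iff[of b M] by auto

lemma fundamental_last_window:
  assumes b: "b \<in> fundamental M" and m: "2 \<le> length b"
  shows "b ! (length b - 1) < b ! 0" "M - b ! 0 \<le> b ! (length b - 1)"
proof -
  have "length b - 1 \<in> {1..<length b}" "length b - (length b - 1) = 1"
    using m by auto
  with b[unfolded fundamental_iff[OF m]]
  have upper: "lex_less (trunc 1 (shift (length b - 1) (per b))) (trunc 1 (per b))"
    and lower: "lex_le (trunc 1 (sbar M (per b))) (trunc 1 (shift (length b - 1) (per b)))"
    by metis+
  have p0: "per b 0 = b ! 0"
    using m by (intro per_nth) linarith
  with upper show "b ! (length b - 1) < b ! 0"
    unfolding lex_less_trunc_iff using m by (auto simp: per_nth)
  from lex_le_nth_le[OF lower, of 0] show "M - b ! 0 \<le> b ! (length b - 1)"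
    using m p0 by (simp add: trunc_def per_nth)
qed

lemma fundamental_first_last:
  assumes b: "b \<in> fundamental M"
  shows "M - b ! 0 \<le> b ! (length b - 1)" "b ! (length b - 1) < M"
proof -
  have "M - b ! 0 \<le> b ! (length b - 1) \<and> b ! (length b - 1) < M"
    using b
  proof (cases rule: fundamental_cases)
    case 2
    then show ?thesis
      using fundamental_last_window[OF b] fundamental_nth_le[OF b, of 0] fundamental_not_Nil[OF b]
      by auto
  qed simp
  then show "M - b ! 0 \<le> b ! (length b - 1)" "b ! (length b - 1) < M"
    by auto
qed

lemma fundamental_lower_window:
  assumes b: "b \<in> fundamental M" and "i < length b"
  shows "lex_le (trunc (length b - i) (sbar M (per b))) (trunc (length b - i) (shift i (per b)))"
proof (cases "i = 0")
  case True
  from b have "lex_le (trunc (length b) (sbar M (per b))) (trunc (length b) (per b))"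
  proof (cases rule: fundamental_cases)
    case 2
    then have "M - b ! 0 < b ! 0"
      using fundamental_last_window[OF b] by linarith
    then have "lex_less (trunc (length b) (sbar M (per b))) (trunc (length b) (per b))"
      unfolding lex_less_trunc_iff using fundamental_not_Nil[OF b]
      by (intro exI[of _ 0]) (simp add: per_nth)
    then show ?thesis
      by simp
  qed (auto simp: lex_le_iff_nth trunc_def per_def)
  with True show ?thesis
    by simp
next
  case False
  with assms show ?thesis
    using fundamental_iff[of b M] by auto
qed

lemma per_fundamental_in_seqs: "b \<in> fundamental M \<Longrightarrow> per b \<in> seqs M"
  unfolding seqs_def per_def using fundamental_nth_le fundamental_not_Nil by simp

lemma shift_per_fundamental_le:
  assumes b: "b \<in> fundamental M"
  shows "lex_le (shift n (per b)) (per b)"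
proof (cases "n mod length b = 0")
  case False
  then have "lex_less (shift (n mod length b) (per b)) (per b)"
    using fundamental_upper_window[OF b, of "n mod length b"] fundamental_not_Nil[OF b]
    by (auto intro: lex_less_of_trunc)
  then show ?thesis
    by (simp add: shift_per_mod[of n])
qed (simp add: shift_per_mod[of n])

lemma lex_le_trunc_sbar_after_tie:
  assumes x: "x \<in> seqs M" and tie: "\<forall>t<W. sbar M x t = shift i x t"
    and period: "shift (i + W) x = x"
    and rest: "W < L \<Longrightarrow> lex_le (trunc (L - W) (sbar M x)) (trunc (L - W) (shift W x))"
  shows "lex_le (trunc L (sbar M x)) (trunc L (shift i x))"
proof (cases "W < L")
  case True
  with rest have "lex_le (trunc (L - W) (sbar M (shift W x))) (trunc (L - W) x)"
    using lex_le_trunc_sbar_swap x shift_in_seqs by blast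
  then have "lex_le (trunc (L - W) (shift W (sbar M x))) (trunc (L - W) (shift W (shift i x)))"
    by (simp only: shift_sbar shift_shift period)
  moreover have "W \<le> L"
    using True by simp
  ultimately show ?thesis
    using lex_le_trunc_shift_iff[OF tie] by blast
next
  case False
  with tie have "trunc L (sbar M x) = trunc L (shift i x)"
    unfolding trunc_eq_iff by simp
  then show ?thesis
    by (rule lex.eq_refl)
qed

(* With i = n mod |b|, the first |b| - i letters are compared by the reflected fundamental
   inequality; on a tie the comparison resumes, after reflection, at a shorter length. *)
lemma sbar_per_fundamental_trunc_le:
  assumes b: "b \<in> fundamental M"
  shows "lex_le (trunc L (sbar M (per b))) (trunc L (shift n (per b)))"
proof -
  let ?p = "per b" and ?m = "length b"
  show ?thesis
  proof (induction L arbitrary: n rule: less_induct)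
    case (less L)
    define i where "i = n mod ?m"
    define W where "W = ?m - i"
    have "i < ?m" "0 < W"
      using fundamental_not_Nil[OF b] unfolding i_def W_def by auto
    have period: "shift (i + W) ?p = ?p"
      using shift_per_mod[of ?m b] \<open>i < ?m\<close> unfolding W_def by simp
    have shift_n: "shift n ?p = shift i ?p"
      unfolding i_def by (rule shift_per_mod)
    have "lex_le (trunc W (sbar M ?p)) (trunc W (shift i ?p))"
      unfolding W_def by (rule fundamental_lower_window[OF b \<open>i < ?m\<close>])
    then consider "lex_less (trunc W (sbar M ?p)) (trunc W (shift i ?p))"
      | "\<forall>t<W. sbar M ?p t = shift i ?p t"
      unfolding lex_le_def trunc_eq_iff by blast
    then show ?case
    proof cases
      case 1
      then have "lex_less (sbar M ?p) (shift n ?p)"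
        unfolding shift_n by (rule lex_less_of_trunc)
      then show ?thesis
        by (intro lex_le_trunc lex.less_imp_le)
    next
      case tie: 2
      have "lex_le (trunc (L - W) (sbar M ?p)) (trunc (L - W) (shift W ?p))" if "W < L"
        using less.IH[of "L - W" W] \<open>0 < W\<close> that by (simp add: sbar_def shift_def)
      then show ?thesis
        unfolding shift_n by (rule lex_le_trunc_sbar_after_tie[OF per_fundamental_in_seqs[OF b] tie period])
    qed
  qed
qed

lemma sbar_per_fundamental_le:
  "b \<in> fundamental M \<Longrightarrow> lex_le (sbar M (per b)) (shift n (per b))"
  using sbar_per_fundamental_trunc_le lex_le_iff_trunc by blast

lemma per_fundamental_in_V: "b \<in> fundamental M \<Longrightarrow> per b \<in> V M"
  unfolding V_def
  using per_fundamental_in_seqs shift_per_fundamental_le sbar_per_fundamental_le by blast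

lemma fundamental_first_pos: "b \<in> fundamental M \<Longrightarrow> 0 < b ! 0"
  using fundamental_first_last[of b M] by linarith

lemma per_fundamental_frequently_nonzero:
  assumes b: "b \<in> fundamental M"
  shows "\<exists>\<^sub>F i in sequentially. per b i \<noteq> 0"
  unfolding frequently_sequentially
proof
  fix N
  have "per b (length b * N) = b ! 0"
    unfolding per_def by simp
  moreover have "N \<le> length b * N"
    using fundamental_not_Nil[OF b] by (simp add: Suc_le_eq)
  ultimately show "\<exists>i\<ge>N. per b i \<noteq> 0"
    using fundamental_first_pos[OF b] by (intro exI[of _ "length b * N"]) auto
qed

definition qR_expansion :: "nat \<Rightarrow> nat list \<Rightarrow> nat \<Rightarrow> nat" where
  "qR_expansion M b = wapp (wplus b) (per (wbar M b))"

lemma qR_expansion_eq_per: "i < length b - 1 \<Longrightarrow> qR_expansion M b i = per b i"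
  unfolding qR_expansion_def wapp_apply wplus_def by (simp add: nth_append nth_butlast per_nth)

lemma qR_expansion_last: "b \<noteq> [] \<Longrightarrow> qR_expansion M b (length b - 1) = b ! (length b - 1) + 1"
  unfolding qR_expansion_def wapp_apply by (simp add: wplus_nth)

lemma shift_qR_expansion: "b \<noteq> [] \<Longrightarrow> shift (length b) (qR_expansion M b) = sbar M (per b)"
  unfolding qR_expansion_def by (simp add: fun_eq_iff wapp_apply per_def wbar_nth)

lemma per_less_qR_expansion: "b \<noteq> [] \<Longrightarrow> lex_less (per b) (qR_expansion M b)"
  using qR_expansion_last[of b M]
  by (intro lex_lessI[of "length b - 1"]) (simp_all add: qR_expansion_eq_per per_nth)

lemma qR_expansion_in_seqs:
  assumes b: "b \<in> fundamental M"
  shows "qR_expansion M b \<in> seqs M"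
  unfolding seqs_def
proof (intro CollectI allI)
  fix i
  have "b \<noteq> []"
    using b by (rule fundamental_not_Nil)
  consider "i < length b - 1" | "i = length b - 1" | "length b \<le> i"
    by linarith
  then show "qR_expansion M b i \<le> M"
  proof cases
    case 1
    then show ?thesis
      using seqsD[OF per_fundamental_in_seqs[OF b]] by (simp add: qR_expansion_eq_per)
  next
    case 2
    then show ?thesis
      using fundamental_first_last(2)[OF b] qR_expansion_last[OF \<open>b \<noteq> []\<close>, of M] by simp
  next
    case 3
    then have "qR_expansion M b i = shift (length b) (qR_expansion M b) (i - length b)"
      by simp
    then show ?thesis
      using \<open>b \<noteq> []\<close> by (simp add: shift_qR_expansion)
  qed
qed

lemma qR_expansion_frequently_nonzero:
  assumes b: "b \<in> fundamental M"
  shows "\<exists>\<^sub>F i in sequentially. qR_expansion M b i \<noteq> 0"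
  unfolding frequently_sequentially
proof
  fix N
  let ?m = "length b"
  have "b \<noteq> []"
    using b by (rule fundamental_not_Nil)
  have "qR_expansion M b (?m * N + (?m - 1) + ?m) = sbar M (per b) (?m * N + (?m - 1))"
    using shift_qR_expansion[OF \<open>b \<noteq> []\<close>, of M] by (metis shift_apply)
  also have "\<dots> = M - b ! (?m - 1)"
    using \<open>b \<noteq> []\<close> by (simp add: per_def)
  finally have "qR_expansion M b (?m * N + (?m - 1) + ?m) \<noteq> 0"
    using fundamental_first_last(2)[OF b] by simp
  moreover have "N \<le> ?m * N"
    using \<open>b \<noteq> []\<close> by (simp add: Suc_le_eq)
  then have "N \<le> ?m * N + (?m - 1) + ?m"
    by linarith
  ultimately show "\<exists>i\<ge>N. qR_expansion M b i \<noteq> 0"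
    by blast
qed

lemma qR_expansion_agree_window_less:
  assumes b: "b \<in> fundamental M" and n: "0 < n" "n < length b"
    and agree: "\<And>i. i < length b - n \<Longrightarrow> shift n (qR_expansion M b) i = qR_expansion M b i"
  shows "lex_less (shift n (qR_expansion M b)) (qR_expansion M b)"
proof -
  let ?c = "qR_expansion M b" and ?p = "per b" and ?W = "length b - n"
  have "b \<noteq> []"
    using b by (rule fundamental_not_Nil)
  have "shift ?W (shift n ?c) = sbar M ?p"
    using shift_qR_expansion[OF \<open>b \<noteq> []\<close>, of M] n by simp
  also have "lex_le \<dots> (shift ?W ?p)"
    by (rule sbar_per_fundamental_le[OF b])
  also have "lex_less \<dots> (shift ?W ?c)"
    using n qR_expansion_eq_per[of _ b M] qR_expansion_last[OF \<open>b \<noteq> []\<close>, of M]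
    by (intro lex_lessI[of "n - 1"]) (simp_all add: per_nth)
  finally show ?thesis
    using lex_less_shift_iff[of ?W "shift n ?c" ?c] agree by simp
qed

(* The fundamental inequality for the window at n decides the comparison, unless the
   increased last letter b_m + 1 closes the gap; then the reflected tail takes over. *)
lemma shift_qR_expansion_less:
  assumes b: "b \<in> fundamental M" and n: "0 < n" "n < length b"
  shows "lex_less (shift n (qR_expansion M b)) (qR_expansion M b)"
proof -
  let ?c = "qR_expansion M b" and ?p = "per b" and ?m = "length b"
  have c_eq_p: "?c i = ?p i" if "i < ?m - 1" for i
    using that by (rule qR_expansion_eq_per)
  have c_last: "?c (?m - 1) = ?p (?m - 1) + 1"
    using qR_expansion_last[OF fundamental_not_Nil[OF b], of M] n by (simp add: per_nth)
  obtain k where k: "k < ?m - n" "\<forall>i<k. ?p (i + n) = ?p i" "?p (k + n) < ?p k"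
    using fundamental_upper_window[OF b n] unfolding lex_less_trunc_iff by auto
  have agree: "\<forall>i<k. shift n ?c i = ?c i"
    using k c_eq_p by simp
  have "shift n ?c k < ?c k \<or> k = ?m - n - 1 \<and> shift n ?c k = ?c k"
  proof (cases "k + n < ?m - 1")
    case True
    then show ?thesis
      using k c_eq_p by (simp add: add.commute)
  next
    case False
    with k(1) have "k + n = ?m - 1"
      by linarith
    then show ?thesis
      using k c_eq_p c_last n by (auto simp: add.commute)
  qed
  then show ?thesis
  proof
    assume "shift n ?c k < ?c k"
    with agree show ?thesis
      by (intro lex_lessI[of k]) auto
  next
    assume "k = ?m - n - 1 \<and> shift n ?c k = ?c k"
    with agree have "shift n ?c i = ?c i" if "i < ?m - n" for i
      using that less_Suc_eq[of i k] by auto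
    then show ?thesis
      by (rule qR_expansion_agree_window_less[OF b n])
  qed
qed

lemma shift_qR_expansion_le:
  assumes b: "b \<in> fundamental M"
  shows "lex_le (shift n (qR_expansion M b)) (qR_expansion M b)"
proof -
  let ?c = "qR_expansion M b" and ?p = "per b" and ?m = "length b"
  have "b \<noteq> []"
    using b by (rule fundamental_not_Nil)
  consider "n = 0" | "?m \<le> n" | "0 < n" "n < ?m"
    by linarith
  then show ?thesis
  proof cases
    case 2
    have "shift n ?c = shift (n - ?m) (shift ?m ?c)"
      using 2 by simp
    also have "\<dots> = sbar M (shift (n - ?m) ?p)"
      by (simp add: shift_qR_expansion[OF \<open>b \<noteq> []\<close>] shift_sbar)
    also have "lex_le \<dots> (sbar M (sbar M ?p))"
      using sbar_per_fundamental_le[OF b] per_fundamental_in_seqs[OF b]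
      by (simp add: lex_le_sbar_iff sbar_in_seqs shift_in_seqs)
    also have "\<dots> = ?p"
      using per_fundamental_in_seqs[OF b] by (rule sbar_sbar)
    also have "lex_le ?p ?c"
      using per_less_qR_expansion[OF \<open>b \<noteq> []\<close>] by (rule lex.less_imp_le)
    finally show ?thesis .
  next
    case 3
    then show ?thesis
      using shift_qR_expansion_less[OF b] by (simp add: lex.less_imp_le)
  qed simp
qed

section \<open>Irreducible sequences\<close>

definition shift_maximal :: "nat \<Rightarrow> (nat \<Rightarrow> nat) \<Rightarrow> bool" where
  "shift_maximal M a \<longleftrightarrow> a \<in> seqs M \<and> (\<forall>n. lex_le (shift n a) a)"

lemma shift_maximal_le: "shift_maximal M a \<Longrightarrow> a i \<le> M"
  unfolding shift_maximal_def by (simp add: seqsD)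

lemma V_iff_shift_maximal: "a \<in> V M \<longleftrightarrow> shift_maximal M a \<and> (\<forall>n. lex_le (sbar M a) (shift n a))"
  unfolding V_def shift_maximal_def by blast

(* A first difference at p >= |w| would give a < sigma^s a for the largest multiple s of |w|
   not exceeding p. *)
lemma shift_maximal_per_less_trunc:
  assumes a: "shift_maximal M a" and "w \<noteq> []" and less: "lex_less (per w) a"
  shows "lex_less (trunc (length w) (per w)) (trunc (length w) a)"
proof -
  let ?m = "length w"
  obtain p where p: "\<And>i. i < p \<Longrightarrow> per w i = a i" "per w p < a p"
    using less by (elim lex_lessE) blast
  have "p < ?m"
  proof (rule ccontr)
    assume "\<not> p < ?m"
    define s where "s = ?m * (p div ?m)"
    define r where "r = p mod ?m"
    have "r < ?m"
      using \<open>w \<noteq> []\<close> unfolding r_def by simp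
    then have "p = r + s" "r < p"
      using \<open>\<not> p < ?m\<close> unfolding r_def s_def by auto
    then have "lex_less a (shift s a)"
      using p per_add_mult[of w _ "p div ?m"] unfolding s_def
      by (intro lex_lessI[of r]) (metis add_less_cancel_right less_trans shift_apply)+
    with a show False
      unfolding shift_maximal_def by (simp add: lex.not_less[symmetric])
  qed
  with p show ?thesis
    unfolding lex_less_trunc_iff by auto
qed

lemma pref_eq_wplus_if_in_interval:
  assumes a: "shift_maximal M a" and "b \<noteq> []"
    and lower: "lex_less (per b) a" and upper: "lex_le a (qR_expansion M b)"
  shows "pref a (length b) = wplus b"
proof -
  let ?m = "length b" and ?c = "qR_expansion M b"
  obtain k where k: "k < ?m" "\<forall>i<k. per b i = a i" "per b k < a k"
    using shift_maximal_per_less_trunc[OF a \<open>b \<noteq> []\<close> lower] unfolding lex_less_trunc_iff by blast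
  have c_eq: "?c i = per b i" if "i < ?m - 1" for i
    using that by (rule qR_expansion_eq_per)
  have "k = ?m - 1"
  proof (rule ccontr)
    assume "k \<noteq> ?m - 1"
    with k c_eq have "lex_less ?c a"
      by (intro lex_lessI[of k]) auto
    with upper show False
      by (simp add: lex.not_less[symmetric])
  qed
  with k have agree: "\<forall>i<?m - 1. a i = b ! i"
    by (simp add: per_nth)
  have "a (?m - 1) \<le> ?c (?m - 1)"
    using lex_le_nth_le[OF upper, of "?m - 1"] agree c_eq by (simp add: per_nth)
  with k \<open>k = ?m - 1\<close> \<open>b \<noteq> []\<close> have "a (?m - 1) = b ! (?m - 1) + 1"
    using qR_expansion_last[of b M] by (simp add: per_nth)
  with agree \<open>b \<noteq> []\<close> show ?thesis
    by (intro nth_equalityI) (auto simp: wplus_nth)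
qed

lemma irreducible_not_in_fundamental_interval:
  assumes a: "shift_maximal M a" and irr: "irreducible_seq M a" and b: "b \<in> fundamental M"
  shows "\<not> (lex_less (per b) a \<and> lex_le a (qR_expansion M b))"
proof
  assume interval: "lex_less (per b) a \<and> lex_le a (qR_expansion M b)"
  let ?m = "length b"
  have "b \<noteq> []"
    using b by (rule fundamental_not_Nil)
  have pref: "pref a ?m = wplus b"
    using pref_eq_wplus_if_in_interval[OF a \<open>b \<noteq> []\<close>] interval by blast
  then have "0 < a (?m - 1)"
    using \<open>b \<noteq> []\<close> pref_nth[of "?m - 1" ?m a] by (simp add: wplus_nth)
  moreover have "per (wminus (pref a ?m)) \<in> V M"
    using pref wminus_wplus[OF \<open>b \<noteq> []\<close>] per_fundamental_in_V[OF b] by simp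
  ultimately have "lex_less (wapp (pref a ?m) (per (wplus (wbar M (pref a ?m))))) a"
    using irr \<open>b \<noteq> []\<close> unfolding irreducible_seq_def by (simp add: Suc_le_eq)
  moreover have "wplus (wbar M (pref a ?m)) = wbar M b"
    using pref wplus_wbar_wplus[OF \<open>b \<noteq> []\<close>] fundamental_first_last(2)[OF b] \<open>b \<noteq> []\<close>
    by (simp add: last_conv_nth)
  ultimately have "lex_less (qR_expansion M b) a"
    using pref unfolding qR_expansion_def by simp
  with interval show False
    by (simp add: lex.not_less[symmetric])
qed

lemma per_wminus_pref_eq: "i < j - 1 \<Longrightarrow> per (wminus (pref a j)) i = a i"
  by (simp add: per_nth wminus_nth)

lemma per_wminus_pref_last: "0 < j \<Longrightarrow> per (wminus (pref a j)) (j - 1) = a (j - 1) - 1"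
  by (simp add: per_nth wminus_nth)

lemma per_wminus_pref_less:
  "0 < j \<Longrightarrow> 0 < a (j - 1) \<Longrightarrow> lex_less (per (wminus (pref a j))) a"
  using per_wminus_pref_last[of j a]
  by (intro lex_lessI[of "j - 1"]) (simp_all add: per_wminus_pref_eq)

lemma qR_expansion_wminus_pref:
  assumes "0 < j" "0 < a (j - 1)" "a (j - 1) \<le> M"
  shows "qR_expansion M (wminus (pref a j)) = wapp (pref a j) (per (wplus (wbar M (pref a j))))"
proof -
  have last: "last (pref a j) = a (j - 1)"
    using assms(1) by (simp add: last_conv_nth)
  then have "wplus (wminus (pref a j)) = pref a j"
    using assms by (simp add: wplus_wminus)
  moreover have "wplus (wbar M (pref a j)) = wbar M (wminus (pref a j))"
    using wplus_wbar_wplus[of "wminus (pref a j)" M] last assms calculation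
    unfolding wminus_def by simp
  ultimately show ?thesis
    unfolding qR_expansion_def by simp
qed

lemma wminus_pref_upper_window:
  assumes a: "shift_maximal M a" and pos: "0 < a (j - 1)" and i: "0 < i" "i < j"
  shows "lex_less (trunc (j - i) (shift i (per (wminus (pref a j)))))
    (trunc (j - i) (per (wminus (pref a j))))"
proof -
  let ?p = "per (wminus (pref a j))" and ?W = "j - i"
  have "lex_less (trunc ?W (shift i ?p)) (trunc ?W (shift i a))"
    unfolding lex_less_trunc_iff using i pos per_wminus_pref_last[of j a]
    by (intro exI[of _ "?W - 1"]) (simp add: per_wminus_pref_eq)
  also have "lex_le \<dots> (trunc ?W a)"
    using a unfolding shift_maximal_def by (blast intro: lex_le_trunc)
  also have "trunc ?W a = trunc ?W ?p"
    using i by (simp add: trunc_eq_iff per_wminus_pref_eq)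
  finally show ?thesis .
qed

lemma wminus_pref_fundamental:
  assumes a: "shift_maximal M a" and j: "0 < j" and pos: "0 < a (j - 1)"
    and lower: "\<forall>i\<in>{1..<j}. lex_le (trunc (j - i) (sbar M (per (wminus (pref a j)))))
      (trunc (j - i) (shift i (per (wminus (pref a j)))))"
    and single: "j = 1 \<Longrightarrow> M + 2 \<le> 2 * a 0"
  shows "wminus (pref a j) \<in> fundamental M"
proof -
  let ?b = "wminus (pref a j)"
  have len: "length ?b = j"
    using j by simp
  have digits: "set ?b \<subseteq> {0..M}"
  proof
    fix x assume "x \<in> set ?b"
    then obtain i where "i < j" "x = ?b ! i"
      by (auto simp: in_set_conv_nth len)
    moreover have "a i \<le> M"
      using a by (rule shift_maximal_le)
    ultimately show "x \<in> {0..M}"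
      by (auto simp: wminus_nth)
  qed
  show ?thesis
  proof (cases "j = 1")
    case True
    then have "?b = [a 0 - 1]"
      by (simp add: wminus_def pref_def)
    moreover have "a 0 \<le> M"
      using a by (rule shift_maximal_le)
    ultimately show ?thesis
      using single True pos by (simp add: fundamental_singleton_iff) linarith
  next
    case False
    with j have two: "2 \<le> length ?b"
      by simp
    show ?thesis
      unfolding fundamental_iff[OF two] using digits lower wminus_pref_upper_window[OF a pos] len
      by auto
  qed
qed

(* alpha (qG): k^infinity for M = 2k and ((k+1) k)^infinity for M = 2k+1. *)
definition qG_expansion :: "nat \<Rightarrow> nat \<Rightarrow> nat" where
  "qG_expansion M = per [(M + 1) div 2, M div 2]"

lemma qG_expansion_apply: "qG_expansion M i = (if even i then (M + 1) div 2 else M div 2)"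
  unfolding qG_expansion_def per_two ..

lemma qG_expansion_eq:
  "(if even M then per [M div 2] else per [M div 2 + 1, M div 2]) = qG_expansion M"
proof -
  have "(M + 1) div 2 = (if even M then M div 2 else M div 2 + 1)"
    by presburger
  then show ?thesis
    by (auto simp: fun_eq_iff qG_expansion_apply per_two per_singleton)
qed

lemma shift_one_qG_expansion: "shift 1 (qG_expansion M) = sbar M (qG_expansion M)"
  by (auto simp: fun_eq_iff qG_expansion_apply)

lemma qG_expansion_in_seqs: "qG_expansion M \<in> seqs M"
proof -
  have "(M + 1) div 2 \<le> M"
    by presburger
  then show ?thesis
    unfolding seqs_def by (simp add: qG_expansion_apply)
qed

lemma shift_maximal_qG_expansion: "shift_maximal M (qG_expansion M)"
  unfolding shift_maximal_def
proof (intro conjI allI qG_expansion_in_seqs)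
  fix n
  have one: "lex_le (shift 1 (qG_expansion M)) (qG_expansion M)"
  proof (cases "even M")
    case True
    then have "shift 1 (qG_expansion M) = qG_expansion M"
      by (auto simp: fun_eq_iff qG_expansion_apply elim: evenE)
    then show ?thesis
      by simp
  next
    case False
    then have "lex_less (shift 1 (qG_expansion M)) (qG_expansion M)"
      by (intro lex_lessI[of 0]) (auto simp: qG_expansion_apply elim: oddE)
    then show ?thesis
      by (rule lex.less_imp_le)
  qed
  have "shift n (qG_expansion M) = (if even n then qG_expansion M else shift 1 (qG_expansion M))"
    by (auto simp: fun_eq_iff qG_expansion_apply)
  with one show "lex_le (shift n (qG_expansion M)) (qG_expansion M)"
    by simp
qed

lemma sbar_qG_expansion_le: "lex_le (sbar M (qG_expansion M)) (qG_expansion M)"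
  using shift_maximal_qG_expansion[of M] unfolding shift_maximal_def shift_one_qG_expansion[symmetric]
  by blast

lemma qG_expansion_frequently_nonzero:
  assumes "0 < M"
  shows "\<exists>\<^sub>F i in sequentially. qG_expansion M i \<noteq> 0"
  unfolding frequently_sequentially
proof
  fix N
  have "qG_expansion M (2 * N) \<noteq> 0"
    using assms by (simp add: qG_expansion_apply)
  then show "\<exists>i\<ge>N. qG_expansion M i \<noteq> 0"
    by (intro exI[of _ "2 * N"]) simp
qed

lemma sbar_le_of_qG_expansion_le:
  assumes "a \<in> seqs M" "lex_le (qG_expansion M) a"
  shows "lex_le (sbar M a) a"
proof -
  have "lex_le (sbar M a) (sbar M (qG_expansion M))"
    using assms by (simp add: lex_le_sbar_iff qG_expansion_in_seqs)
  also have "lex_le \<dots> (qG_expansion M)"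
    by (rule sbar_qG_expansion_le)
  also have "lex_le \<dots> a"
    by (rule assms(2))
  finally show ?thesis .
qed

lemma sbar_le_shift_one_of_qG_expansion_le:
  assumes a: "shift_maximal M a" and g: "lex_le (qG_expansion M) a" and small: "2 * a 0 \<le> M + 1"
  shows "lex_le (sbar M a) (shift 1 a)"
proof -
  have a0: "a 0 = (M + 1) div 2"
    using lex_le_nth_le[OF g, of 0] small by (simp add: qG_expansion_apply)
  show ?thesis
  proof (cases "M div 2 < a 1")
    case True
    with a0 have "lex_less (sbar M a) (shift 1 a)"
      by (intro lex_lessI[of 0]) auto
    then show ?thesis
      by (rule lex.less_imp_le)
  next
    case False
    with a0 have a1: "a 1 = M div 2"
      using lex_le_nth_le[OF g, of 1] by (simp add: qG_expansion_apply)
    have "a = qG_expansion M"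
    proof (rule ccontr)
      assume "a \<noteq> qG_expansion M"
      with g have "lex_less (per [(M + 1) div 2, M div 2]) a"
        unfolding qG_expansion_def lex_le_def by simp
      with a have "lex_less (trunc 2 (qG_expansion M)) (trunc 2 a)"
        using shift_maximal_per_less_trunc[of M a "[(M + 1) div 2, M div 2]"]
        unfolding qG_expansion_def by (simp add: numeral_2_eq_2)
      moreover have "trunc 2 (qG_expansion M) = trunc 2 a"
        unfolding trunc_eq_iff using a0 a1 by (auto simp: qG_expansion_apply less_2_cases_iff)
      ultimately show False
        by simp
    qed
    then show ?thesis
      using shift_one_qG_expansion[of M] by simp
  qed
qed

(* A tie on the window would propagate bar a <= sigma^i a to bar a <= sigma^n a. *)
lemma least_violation_window_less:
  assumes a: "shift_maximal M a" and le: "lex_le (sbar M a) (shift i a)"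
    and less: "lex_less (shift n a) (sbar M a)" and "i < n"
  shows "lex_less (trunc (n - i) (sbar M a)) (trunc (n - i) (shift i a))"
proof -
  let ?L = "n - i"
  have "trunc ?L (sbar M a) \<noteq> trunc ?L (shift i a)"
  proof
    assume "trunc ?L (sbar M a) = trunc ?L (shift i a)"
    then have "lex_le (shift ?L (sbar M a)) (shift ?L (shift i a))"
      using le lex_le_shift_iff[of ?L "sbar M a" "shift i a"] by (simp add: trunc_eq_iff)
    moreover have "shift ?L (shift i a) = shift n a"
      using \<open>i < n\<close> by simp
    moreover have "lex_le (sbar M a) (shift ?L (sbar M a))"
      using a unfolding shift_maximal_def
      by (simp add: shift_sbar lex_le_sbar_iff shift_in_seqs)
    ultimately have "lex_le (sbar M a) (shift n a)"
      by auto
    with less show False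
      by (simp add: lex.not_less[symmetric])
  qed
  moreover have "lex_le (trunc ?L (sbar M a)) (trunc ?L (shift i a))"
    using le by (rule lex_le_trunc)
  ultimately show ?thesis
    by (simp add: lex.le_less)
qed

lemma wminus_pref_lower_window:
  assumes "lex_less (trunc (n - i) (sbar M a)) (trunc (n - i) (shift i a))" "0 < i" "i < n"
  shows "lex_le (trunc (n - i) (sbar M (per (wminus (pref a n)))))
    (trunc (n - i) (shift i (per (wminus (pref a n)))))"
proof -
  let ?p = "per (wminus (pref a n))"
  have "trunc (n - i) (sbar M ?p) = trunc (n - i) (sbar M a)"
    using assms(2,3) by (simp add: trunc_eq_iff per_wminus_pref_eq)
  moreover have "lex_le (trunc (n - i) (sbar M a)) (trunc (n - i) (shift i ?p))"
    using assms(3) per_wminus_pref_last[of n a]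
    by (intro lex_le_trunc_decrement_last[OF assms(1)]) (simp_all add: per_wminus_pref_eq)
  ultimately show ?thesis
    by simp
qed

lemma less_qR_expansion_wminus_pref:
  assumes n: "0 < n" and pos: "0 < a (n - 1)" "a (n - 1) \<le> M"
    and less: "lex_less (shift n a) (sbar M a)"
  shows "lex_less a (qR_expansion M (wminus (pref a n)))"
proof -
  let ?b = "wminus (pref a n)"
  let ?c = "qR_expansion M ?b" and ?p = "per ?b"
  have "?b \<noteq> []"
    by simp
  have agree: "a i = ?c i" if "i < n" for i
  proof (cases "i < n - 1")
    case True
    then show ?thesis
      by (simp add: qR_expansion_eq_per per_wminus_pref_eq)
  next
    case False
    with that have "i = n - 1"
      by linarith
    then show ?thesis
      using qR_expansion_last[OF \<open>?b \<noteq> []\<close>, of M] per_wminus_pref_last[of n a] n pos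
      by (simp add: per_nth)
  qed
  have "lex_less (shift n a) (sbar M ?p)"
    using n pos per_wminus_pref_last[of n a]
    by (intro lex_less_of_le_raised[OF lex.less_imp_le[OF less], of "n - 1"])
      (simp_all add: per_wminus_pref_eq)
  then have "lex_less (shift n a) (shift n ?c)"
    using shift_qR_expansion[OF \<open>?b \<noteq> []\<close>, of M] n by simp
  then show ?thesis
    using lex_less_shift_iff[of n a ?c] agree by simp
qed

lemma least_sbar_violation:
  assumes a: "shift_maximal M a" and g: "lex_le (qG_expansion M) a" and "a \<notin> V M"
  obtains n where "0 < n" "lex_less (shift n a) (sbar M a)"
    "\<And>i. i < n \<Longrightarrow> lex_le (sbar M a) (shift i a)"
proof -
  have "\<exists>n. lex_less (shift n a) (sbar M a)"
    using \<open>a \<notin> V M\<close> a unfolding V_iff_shift_maximal by (simp add: lex.not_le[symmetric])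
  then obtain n where less: "lex_less (shift n a) (sbar M a)"
    and least: "\<And>i. i < n \<Longrightarrow> \<not> lex_less (shift i a) (sbar M a)"
    unfolding exists_least_iff[of "\<lambda>n. lex_less (shift n a) (sbar M a)"] by blast
  have "lex_le (sbar M a) a"
    using sbar_le_of_qG_expansion_le[OF _ g] a unfolding shift_maximal_def by blast
  with less have "0 < n"
    by (cases n) auto
  with less least show ?thesis
    by (simp add: that lex.not_less)
qed

lemma fundamental_interval_if_not_in_V:
  assumes a: "shift_maximal M a" and g: "lex_le (qG_expansion M) a" and "a \<notin> V M"
  shows "\<exists>b\<in>fundamental M. lex_less (per b) a \<and> lex_le a (qR_expansion M b)"
proof -
  have digits: "a i \<le> M" for i
    using a by (rule shift_maximal_le)
  obtain n where n: "0 < n" and less: "lex_less (shift n a) (sbar M a)"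
    and least: "\<And>i. i < n \<Longrightarrow> lex_le (sbar M a) (shift i a)"
    using least_sbar_violation[OF assms] by blast
  have window: "lex_less (trunc (n - i) (sbar M a)) (trunc (n - i) (shift i a))" if "i < n" for i
    using least_violation_window_less[OF a least[OF that] less that] .
  have pos: "0 < a (n - 1)"
    using window[of "n - 1"] n unfolding lex_less_trunc_iff by auto
  let ?b = "wminus (pref a n)"
  have "?b \<in> fundamental M"
  proof (rule wminus_pref_fundamental[OF a n pos])
    show "\<forall>i\<in>{1..<n}. lex_le (trunc (n - i) (sbar M (per ?b))) (trunc (n - i) (shift i (per ?b)))"
      using window wminus_pref_lower_window by auto
    show "M + 2 \<le> 2 * a 0" if "n = 1"
    proof -
      have "\<not> 2 * a 0 \<le> M + 1"
        using sbar_le_shift_one_of_qG_expansion_le[OF a g] less that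
        by (auto simp: lex.not_less[symmetric])
      then show ?thesis
        by linarith
    qed
  qed
  moreover have "lex_le a (qR_expansion M ?b)"
    using less_qR_expansion_wminus_pref[of n a M, OF n pos digits less] by (rule lex.less_imp_le)
  ultimately show ?thesis
    using per_wminus_pref_less[of n a, OF n pos] by blast
qed

lemma fundamental_interval_if_violation:
  assumes a: "shift_maximal M a" and j: "0 < j" and pos: "0 < a (j - 1)"
    and in_V: "per (wminus (pref a j)) \<in> V M"
    and not_less: "\<not> lex_less (wapp (pref a j) (per (wplus (wbar M (pref a j))))) a"
  shows "\<exists>b\<in>fundamental M. lex_less (per b) a \<and> lex_le a (qR_expansion M b)"
proof -
  let ?b = "wminus (pref a j)"
  have digits: "a i \<le> M" for i
    using a by (rule shift_maximal_le)
  have lower: "lex_le (sbar M (per ?b)) (shift i (per ?b))" for i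
    using in_V unfolding V_iff_shift_maximal by blast
  have "?b \<in> fundamental M"
  proof (rule wminus_pref_fundamental[OF a j pos])
    show "\<forall>i\<in>{1..<j}. lex_le (trunc (j - i) (sbar M (per ?b))) (trunc (j - i) (shift i (per ?b)))"
      using lower by (blast intro: lex_le_trunc)
    show "M + 2 \<le> 2 * a 0" if "j = 1"
      using lex_le_nth_le[OF lower[of 0], of 0] per_wminus_pref_last[OF j, of a] that pos digits[of 0]
      by simp
  qed
  moreover have "lex_le a (qR_expansion M ?b)"
    using not_less qR_expansion_wminus_pref[of j a M, OF j pos digits] by (simp add: lex.not_less[symmetric])
  ultimately show ?thesis
    using per_wminus_pref_less[of j a, OF j pos] by blast
qed

theorem irreducible_iff_no_fundamental_interval:
  assumes a: "shift_maximal M a" and g: "lex_le (qG_expansion M) a"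
  shows "irreducible_seq M a \<longleftrightarrow>
    (\<forall>b\<in>fundamental M. \<not> (lex_less (per b) a \<and> lex_le a (qR_expansion M b)))"
proof
  assume "irreducible_seq M a"
  then show "\<forall>b\<in>fundamental M. \<not> (lex_less (per b) a \<and> lex_le a (qR_expansion M b))"
    using irreducible_not_in_fundamental_interval[OF a] by blast
next
  assume no_interval: "\<forall>b\<in>fundamental M. \<not> (lex_less (per b) a \<and> lex_le a (qR_expansion M b))"
  show "irreducible_seq M a"
  proof (rule ccontr)
    assume "\<not> irreducible_seq M a"
    then consider "a \<notin> V M"
      | j where "j \<ge> 1" "0 < a (j - 1)" "per (wminus (pref a j)) \<in> V M"
          "\<not> lex_less (wapp (pref a j) (per (wplus (wbar M (pref a j))))) a"
      unfolding irreducible_seq_def by blast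
    then show False
    proof cases
      case 1
      then show False
        using fundamental_interval_if_not_in_V[OF a g] no_interval by blast
    next
      case 2
      then show False
        using fundamental_interval_if_violation[OF a, of j] no_interval by simp
    qed
  qed
qed

section \<open>Quasi-greedy expansions\<close>

definition expansion_rem :: "real \<Rightarrow> (nat \<Rightarrow> nat) \<Rightarrow> nat \<Rightarrow> real" where
  "expansion_rem q a n = q ^ n * (1 - (\<Sum>i<n. a i / q ^ Suc i))"

lemma expansion_rem_0 [simp]: "expansion_rem q a 0 = 1"
  unfolding expansion_rem_def by simp

lemma expansion_rem_Suc:
  "0 < q \<Longrightarrow> expansion_rem q a (Suc n) = q * expansion_rem q a n - a n"
  unfolding expansion_rem_def by (simp add: field_simps)

lemma expansion_rem_cong:
  "(\<And>i. i < n \<Longrightarrow> a i = b i) \<Longrightarrow> expansion_rem q a n = expansion_rem q b n"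
  unfolding expansion_rem_def by simp

lemma expansion_psum_eq:
  "0 < q \<Longrightarrow> (\<Sum>i<n. a i / q ^ Suc i) = 1 - expansion_rem q a n / q ^ n"
  unfolding expansion_rem_def by simp

lemma expansion_psum_less_one_iff:
  "0 < q \<Longrightarrow> (\<Sum>i<n. a i / q ^ Suc i) < 1 \<longleftrightarrow> 0 < expansion_rem q a n"
  unfolding expansion_rem_def by (simp add: zero_less_mult_iff)

lemma expansion_rem_window:
  assumes "0 < q"
  shows "expansion_rem q a n =
    (\<Sum>i<K. a (n + i) / q ^ Suc i) + expansion_rem q a (n + K) / q ^ K"
proof (induction K)
  case (Suc K)
  have "expansion_rem q a (n + K) / q ^ K =
      a (n + K) / q ^ Suc K + expansion_rem q a (n + Suc K) / q ^ Suc K"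
    using assms by (simp add: expansion_rem_Suc field_simps)
  with Suc show ?case
    by simp
qed simp

lemma expansion_rem_sums:
  assumes q: "0 < q" and s: "(\<lambda>i. a i / q ^ Suc i) sums 1"
  shows "(\<lambda>i. a (n + i) / q ^ Suc i) sums expansion_rem q a n"
proof -
  have "(\<lambda>i. q ^ n * (a (i + n) / q ^ Suc (i + n))) sums expansion_rem q a n"
    unfolding expansion_rem_def using sums_split_initial_segment[OF s, of n]
    by (intro sums_mult) simp
  moreover have "(\<lambda>i. q ^ n * (a (i + n) / q ^ Suc (i + n))) = (\<lambda>i. a (n + i) / q ^ Suc i)"
    using q by (simp add: fun_eq_iff power_add field_simps add.commute)
  ultimately show ?thesis
    by simp
qed

(* The largest digit d <= M with d < q * t. *)
definition qgreedy_digit :: "nat \<Rightarrow> real \<Rightarrow> real \<Rightarrow> nat" where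
  "qgreedy_digit M q t = min M (nat \<lceil>q * t\<rceil> - 1)"

lemma qgreedy_digit_bounds:
  fixes q t :: real
  assumes q: "1 < q" "q \<le> real M + 1" and t: "0 < t" "t \<le> 1"
  shows "qgreedy_digit M q t \<le> M" "qgreedy_digit M q t < q * t"
    "qgreedy_digit M q t < M \<Longrightarrow> q * t \<le> qgreedy_digit M q t + 1"
    "q * t - qgreedy_digit M q t \<le> 1"
proof -
  let ?c = "\<lceil>q * t\<rceil>"
  have "0 < q * t"
    using q t by simp
  then have "1 \<le> ?c"
    by (simp add: le_ceiling_iff)
  then have "1 \<le> nat ?c"
    by linarith
  then have "real (nat ?c - 1) = real (nat ?c) - 1"
    by (simp add: of_nat_diff)
  with \<open>1 \<le> ?c\<close> have c: "real (nat ?c - 1) = ?c - 1"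
    by simp
  show le_M: "qgreedy_digit M q t \<le> M"
    unfolding qgreedy_digit_def by simp
  have "real (qgreedy_digit M q t) \<le> ?c - 1"
    unfolding qgreedy_digit_def c[symmetric] by simp
  then show "qgreedy_digit M q t < q * t"
    by linarith
  show below_M: "q * t \<le> qgreedy_digit M q t + 1" if "qgreedy_digit M q t < M"
    using that c unfolding qgreedy_digit_def by (simp add: min_def split: if_splits)
  show "q * t - qgreedy_digit M q t \<le> 1"
  proof (cases "qgreedy_digit M q t < M")
    case False
    with le_M have "real (qgreedy_digit M q t) = M"
      by simp
    moreover have "q * t \<le> q"
      using q t by simp
    ultimately show ?thesis
      using q by linarith
  qed (use below_M in simp)
qed

fun qgreedy_rem :: "nat \<Rightarrow> real \<Rightarrow> nat \<Rightarrow> real" where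
  "qgreedy_rem M q 0 = 1"
| "qgreedy_rem M q (Suc n) = q * qgreedy_rem M q n - qgreedy_digit M q (qgreedy_rem M q n)"

definition qgreedy :: "nat \<Rightarrow> real \<Rightarrow> nat \<Rightarrow> nat" where
  "qgreedy M q n = qgreedy_digit M q (qgreedy_rem M q n)"

context
  fixes M :: nat and q :: real
  assumes q: "1 < q" "q \<le> real M + 1"
begin

lemma qgreedy_rem_bounds: "0 < qgreedy_rem M q n \<and> qgreedy_rem M q n \<le> 1"
proof (induction n)
  case (Suc n)
  then show ?case
    using qgreedy_digit_bounds(2,4)[OF q, of "qgreedy_rem M q n"] by simp
qed simp

lemma qgreedy_rem_eq: "qgreedy_rem M q n = expansion_rem q (qgreedy M q) n"
proof (induction n)
  case (Suc n)
  have "qgreedy_rem M q (Suc n) = q * qgreedy_rem M q n - qgreedy M q n"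
    by (simp add: qgreedy_def)
  also have "\<dots> = expansion_rem q (qgreedy M q) (Suc n)"
    using Suc q by (simp add: expansion_rem_Suc)
  finally show ?case .
qed simp

lemma qgreedy_in_seqs: "qgreedy M q \<in> seqs M"
  unfolding seqs_def qgreedy_def using qgreedy_digit_bounds(1)[OF q] qgreedy_rem_bounds by simp

lemma qgreedy_rem_pos: "0 < expansion_rem q (qgreedy M q) n"
  using qgreedy_rem_bounds[of n] unfolding qgreedy_rem_eq by simp

lemma qgreedy_rem_le_one: "expansion_rem q (qgreedy M q) n \<le> 1"
  using qgreedy_rem_bounds[of n] unfolding qgreedy_rem_eq by simp

lemma qgreedy_below_M:
  assumes "qgreedy M q n < M"
  shows "q * expansion_rem q (qgreedy M q) n \<le> qgreedy M q n + 1"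
  using assms qgreedy_digit_bounds(3)[OF q, of "qgreedy_rem M q n"] qgreedy_rem_bounds[of n]
  unfolding qgreedy_def qgreedy_rem_eq[symmetric] by simp

lemma qgreedy_sums: "(\<lambda>i. qgreedy M q i / q ^ Suc i) sums 1"
proof -
  let ?r = "expansion_rem q (qgreedy M q)"
  have "(\<lambda>n. ?r n / q ^ n) \<longlonglongrightarrow> 0"
  proof (rule tendsto_sandwich[of "\<lambda>_. 0" _ _ "\<lambda>n. (1 / q) ^ n"])
    show "\<forall>\<^sub>F n in sequentially. 0 \<le> ?r n / q ^ n"
      using qgreedy_rem_pos q by (auto intro!: always_eventually less_imp_le)
    show "\<forall>\<^sub>F n in sequentially. ?r n / q ^ n \<le> (1 / q) ^ n"
      using qgreedy_rem_le_one q
      by (auto intro!: always_eventually simp: power_one_over divide_right_mono)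
    show "(\<lambda>n. (1 / q) ^ n) \<longlonglongrightarrow> 0"
      using q by (intro LIMSEQ_power_zero) simp
  qed simp
  then have "(\<lambda>n. 1 - ?r n / q ^ n) \<longlonglongrightarrow> 1"
    using tendsto_diff[OF tendsto_const] by fastforce
  then show ?thesis
    unfolding sums_def expansion_psum_eq[OF less_trans[OF zero_less_one q(1)]] .
qed

lemma qgreedy_frequently_nonzero: "\<exists>\<^sub>F i in sequentially. qgreedy M q i \<noteq> 0"
  unfolding frequently_sequentially
proof (rule ccontr)
  let ?r = "expansion_rem q (qgreedy M q)"
  assume "\<not> (\<forall>N. \<exists>i\<ge>N. qgreedy M q i \<noteq> 0)"
  then obtain N where zero: "\<And>i. N \<le> i \<Longrightarrow> qgreedy M q i = 0"
    by auto
  have grow: "?r (N + k) = q ^ k * ?r N" for k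
    using q by (induction k) (simp_all add: expansion_rem_Suc zero)
  obtain k where "1 / ?r N < q ^ k"
    using real_arch_pow[OF q(1)] by blast
  then have "1 < q ^ k * ?r N"
    using qgreedy_rem_pos[of N] by (simp add: field_simps)
  then show False
    using grow[of k] qgreedy_rem_le_one[of "N + k"] by simp
qed

lemma lex_le_qgreedy:
  assumes c: "c \<in> seqs M" and pos: "\<And>n. 0 < expansion_rem q c n"
  shows "lex_le c (qgreedy M q)"
proof (rule ccontr)
  assume "\<not> lex_le c (qgreedy M q)"
  then have "lex_less (qgreedy M q) c"
    by simp
  then obtain n where agree: "\<And>i. i < n \<Longrightarrow> qgreedy M q i = c i" and less: "qgreedy M q n < c n"
    by (elim lex_lessE) blast
  have "qgreedy M q n < M"
    using less seqsD[OF c, of n] by linarith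
  then have "q * expansion_rem q (qgreedy M q) n \<le> c n"
    using qgreedy_below_M less by fastforce
  moreover have "expansion_rem q (qgreedy M q) n = expansion_rem q c n"
    using agree by (rule expansion_rem_cong)
  ultimately have "expansion_rem q c (Suc n) \<le> 0"
    using q by (simp add: expansion_rem_Suc)
  with pos show False
    by (simp add: not_less[symmetric])
qed

lemma shift_qgreedy_le: "lex_le (shift n (qgreedy M q)) (qgreedy M q)"
proof (rule lex_le_qgreedy)
  let ?r = "expansion_rem q (qgreedy M q)"
  show "shift n (qgreedy M q) \<in> seqs M"
    using qgreedy_in_seqs by (rule shift_in_seqs)
  fix K
  have "(\<Sum>i<K. shift n (qgreedy M q) i / q ^ Suc i) = ?r n - ?r (n + K) / q ^ K"
    using expansion_rem_window[of q "qgreedy M q" n K] q by (simp add: add.commute)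
  also have "\<dots> < 1"
  proof -
    have "0 < ?r (n + K) / q ^ K"
      using qgreedy_rem_pos[of "n + K"] q by simp
    then show ?thesis
      using qgreedy_rem_le_one[of n] by linarith
  qed
  finally show "0 < expansion_rem q (shift n (qgreedy M q)) K"
    using expansion_psum_less_one_iff[of q "shift n (qgreedy M q)" K] q by simp
qed

end

lemma is_qg_exp_iff:
  "is_qg_exp M q a \<longleftrightarrow> a \<in> seqs M \<and> (\<exists>\<^sub>F i in sequentially. a i \<noteq> 0) \<and>
    (\<lambda>i. a i / q ^ Suc i) sums 1"
  unfolding is_qg_exp_def frequently_sequentially ..

lemma is_qg_exp_rem_pos:
  assumes a: "is_qg_exp M q a" and q: "1 < q"
  shows "0 < expansion_rem q a n"
proof -
  have s: "(\<lambda>i. a (n + i) / q ^ Suc i) sums expansion_rem q a n"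
    using a q unfolding is_qg_exp_def by (intro expansion_rem_sums) auto
  obtain i where "n \<le> i" "a i \<noteq> 0"
    using a unfolding is_qg_exp_def by blast
  then have "0 < a (n + (i - n)) / q ^ Suc (i - n)"
    using q by simp
  then have "0 < (\<Sum>k. a (n + k) / q ^ Suc k)"
    using q by (intro suminf_pos2[OF sums_summable[OF s]]) auto
  with s show ?thesis
    using sums_unique by fastforce
qed

lemma alpha_eq_qgreedy:
  assumes q: "1 < q" "q \<le> real M + 1"
  shows "alpha M q = qgreedy M q"
  unfolding alpha_def
proof (rule the_equality)
  have greatest: "lex_le b (qgreedy M q)" if "is_qg_exp M q b" for b
    using that q is_qg_exp_rem_pos unfolding is_qg_exp_def by (blast intro: lex_le_qgreedy)
  moreover have "is_qg_exp M q (qgreedy M q)"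
    unfolding is_qg_exp_iff
    using qgreedy_in_seqs qgreedy_frequently_nonzero qgreedy_sums q by blast
  ultimately show "is_qg_exp M q (qgreedy M q) \<and> (\<forall>b. is_qg_exp M q b \<longrightarrow> lex_le b (qgreedy M q))"
    by blast
  show "a = qgreedy M q" if "is_qg_exp M q a \<and> (\<forall>b. is_qg_exp M q b \<longrightarrow> lex_le b a)" for a
    using that greatest \<open>is_qg_exp M q (qgreedy M q)\<close> lex.order.antisym by blast
qed

lemma alpha_is_qg_exp: "1 < q \<Longrightarrow> q \<le> real M + 1 \<Longrightarrow> is_qg_exp M q (alpha M q)"
  unfolding is_qg_exp_iff alpha_eq_qgreedy
  using qgreedy_in_seqs qgreedy_frequently_nonzero qgreedy_sums by blast

lemma shift_maximal_alpha: "1 < q \<Longrightarrow> q \<le> real M + 1 \<Longrightarrow> shift_maximal M (alpha M q)"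
  unfolding shift_maximal_def alpha_eq_qgreedy using qgreedy_in_seqs shift_qgreedy_le by blast

lemma expansion_base_unique:
  fixes a :: "nat \<Rightarrow> nat" and q r :: real
  assumes q: "(\<lambda>i. a i / q ^ Suc i) sums 1" and r: "(\<lambda>i. a i / r ^ Suc i) sums 1"
    and "a k \<noteq> 0" "0 < q" "q \<le> r"
  shows "q = r"
proof (rule ccontr)
  assume "q \<noteq> r"
  with \<open>q \<le> r\<close> have "q < r"
    by simp
  then have smaller: "a i / r ^ Suc i \<le> a i / q ^ Suc i" for i
    using \<open>0 < q\<close> by (intro divide_left_mono power_mono mult_pos_pos) auto
  have diff: "(\<lambda>i. a i / q ^ Suc i - a i / r ^ Suc i) sums 0"
    using sums_diff[OF q r] by simp
  have "a k / r ^ Suc k < a k / q ^ Suc k"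
    using \<open>a k \<noteq> 0\<close> \<open>0 < q\<close> \<open>q < r\<close>
    by (intro divide_strict_left_mono power_strict_mono mult_pos_pos) auto
  then have "0 < (\<Sum>i. a i / q ^ Suc i - a i / r ^ Suc i)"
    by (intro suminf_pos2[OF sums_summable[OF diff]]) (use smaller in auto)
  with diff show False
    using sums_unique by fastforce
qed

lemma alpha_mono:
  assumes q: "1 < q" "q \<le> r" "r \<le> real M + 1"
  shows "lex_le (alpha M q) (alpha M r)"
proof -
  let ?a = "alpha M q"
  have r: "1 < r"
    using q by simp
  have a: "is_qg_exp M q ?a"
    using q by (intro alpha_is_qg_exp) auto
  show ?thesis
    unfolding alpha_eq_qgreedy[OF r q(3)]
  proof (rule lex_le_qgreedy[OF r q(3)])
    show "?a \<in> seqs M"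
      using a unfolding is_qg_exp_def by blast
    fix n
    have "(\<Sum>i<n. ?a i / r ^ Suc i) \<le> (\<Sum>i<n. ?a i / q ^ Suc i)"
      using q by (intro sum_mono divide_left_mono power_mono mult_pos_pos) auto
    also have "\<dots> < 1"
      using is_qg_exp_rem_pos[OF a q(1)] expansion_psum_less_one_iff[of q ?a n] q by simp
    finally show "0 < expansion_rem r ?a n"
      using expansion_psum_less_one_iff[of r ?a n] r by simp
  qed
qed

lemma alpha_strict_mono:
  assumes q: "1 < q" "q < r" "r \<le> real M + 1"
  shows "lex_less (alpha M q) (alpha M r)"
proof -
  have a: "is_qg_exp M q (alpha M q)" and b: "is_qg_exp M r (alpha M r)"
    using q by (auto intro: alpha_is_qg_exp)
  obtain k where "alpha M q k \<noteq> 0"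
    using a unfolding is_qg_exp_def by blast
  then have "alpha M q \<noteq> alpha M r"
    using expansion_base_unique[of "alpha M q" q r k] a b q unfolding is_qg_exp_def by auto
  with alpha_mono[of q r M] q show ?thesis
    by (simp add: lex.le_less)
qed

lemma alpha_less_iff:
  assumes "1 < q" "q \<le> real M + 1" "1 < r" "r \<le> real M + 1"
  shows "lex_less (alpha M q) (alpha M r) \<longleftrightarrow> q < r"
  using alpha_strict_mono[of q r M] alpha_strict_mono[of r q M] assms
  by (metis lex.less_asym lex.less_irrefl linorder_neqE_linordered_idom)

lemma alpha_le_iff:
  assumes "1 < q" "q \<le> real M + 1" "1 < r" "r \<le> real M + 1"
  shows "lex_le (alpha M q) (alpha M r) \<longleftrightarrow> q \<le> r"
  using alpha_less_iff[OF assms(3,4,1,2)] by (simp add: lex.not_less[symmetric] not_less)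

section \<open>Parry's criterion\<close>

lemma power_Suc_sums:
  assumes "1 < (q::real)"
  shows "(\<lambda>i. c / q ^ Suc i) sums (c / (q - 1))"
proof -
  have "(\<lambda>i. c / q * (1 / q) ^ i) sums (c / q * (1 / (1 - 1 / q)))"
    using assms by (intro sums_mult geometric_sums) simp
  moreover have "c / q * (1 / (1 - 1 / q)) = c / (q - 1)"
    using assms by (simp add: field_simps)
  moreover have "(\<lambda>i. c / q * (1 / q) ^ i) = (\<lambda>i. c / q ^ Suc i)"
    by (simp add: fun_eq_iff power_one_over)
  ultimately show ?thesis
    by metis
qed

lemma expansion_rem_nonneg:
  assumes q: "1 < q" and s: "(\<lambda>i. a i / q ^ Suc i) sums 1"
  shows "0 \<le> expansion_rem q a n"
proof -
  have "(\<lambda>i. a (n + i) / q ^ Suc i) sums expansion_rem q a n"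
    using q s by (intro expansion_rem_sums) auto
  moreover have "0 \<le> (\<Sum>i. a (n + i) / q ^ Suc i)"
    using q by (intro suminf_nonneg sums_summable[OF calculation]) simp
  ultimately show ?thesis
    using sums_unique by fastforce
qed

lemma expansion_rem_le:
  assumes q: "1 < q" and a: "a \<in> seqs M" and s: "(\<lambda>i. a i / q ^ Suc i) sums 1"
  shows "expansion_rem q a n \<le> M / (q - 1)"
proof (rule sums_le[OF _ expansion_rem_sums power_Suc_sums[OF q]])
  show "a (n + i) / q ^ Suc i \<le> M / q ^ Suc i" for i
    using seqsD[OF a, of "n + i"] q by (intro divide_right_mono) auto
qed (use q s in auto)

lemma expansion_rem_first_difference:
  assumes q: "0 < q" and agree: "\<And>i. i < k \<Longrightarrow> a (i + n) = a i" and less: "a (k + n) < a k"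
  shows "expansion_rem q a n - 1 \<le>
    (expansion_rem q a (n + Suc k) - 1 - expansion_rem q a (Suc k)) / q ^ Suc k"
proof -
  let ?R = "expansion_rem q a"
  define P where "P = (\<Sum>i<k. a i / q ^ Suc i)"
  define Q where "Q = q ^ Suc k"
  have "(\<Sum>i<k. a (n + i) / q ^ Suc i) = P"
    unfolding P_def using agree by (intro sum.cong) (auto simp: add.commute)
  then have "?R n = P + a (n + k) / Q + ?R (n + Suc k) / Q"
    using expansion_rem_window[OF q, of a n "Suc k"] unfolding Q_def by simp
  moreover have "1 = P + a k / Q + ?R (Suc k) / Q"
    using expansion_rem_window[OF q, of a 0 "Suc k"] unfolding P_def Q_def by simp
  moreover have "real (a (n + k)) + 1 \<le> a k"
    using less by (simp add: add.commute)
  moreover have "0 < Q"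
    using q unfolding Q_def by simp
  ultimately show ?thesis
    unfolding Q_def[symmetric] by (simp add: field_simps)
qed

lemma shift_maximal_rem_step:
  assumes q: "1 < q" and a: "shift_maximal M a" and s: "(\<lambda>i. a i / q ^ Suc i) sums 1"
    and bound: "\<And>m. expansion_rem q a m \<le> S"
  shows "expansion_rem q a n \<le> 1 + (S - 1) / q"
proof -
  let ?R = "expansion_rem q a"
  have "1 \<le> S"
    using bound[of 0] by simp
  consider "shift n a = a" | "lex_less (shift n a) a"
    using a unfolding shift_maximal_def lex_le_def by blast
  then show ?thesis
  proof cases
    case 1
    then have "(\<lambda>i. a (n + i) / q ^ Suc i) = (\<lambda>i. a i / q ^ Suc i)"
      by (metis add.commute shift_apply)
    then have "?R n = 1"
      using expansion_rem_sums[of q a n] q s sums_unique2 by fastforce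
    with \<open>1 \<le> S\<close> q show ?thesis
      by simp
  next
    case 2
    then obtain k where agree: "\<And>i. i < k \<Longrightarrow> a (i + n) = a i" and less: "a (k + n) < a k"
      by (elim lex_lessE) auto
    have "q \<le> q ^ Suc k"
      using q by (intro self_le_power) auto
    have "?R n - 1 \<le> (?R (n + Suc k) - 1 - ?R (Suc k)) / q ^ Suc k"
      using q agree less by (intro expansion_rem_first_difference) auto
    also have "\<dots> \<le> (S - 1) / q ^ Suc k"
      using bound[of "n + Suc k"] expansion_rem_nonneg[OF q s, of "Suc k"] q
      by (intro divide_right_mono) auto
    also have "\<dots> \<le> (S - 1) / q"
      using \<open>1 \<le> S\<close> \<open>q \<le> q ^ Suc k\<close> q by (intro divide_left_mono) auto
    finally show ?thesis
      by simp
  qed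
qed

lemma shift_maximal_rem_le_one:
  assumes q: "1 < q" and a: "shift_maximal M a" and s: "(\<lambda>i. a i / q ^ Suc i) sums 1"
  shows "expansion_rem q a n \<le> 1"
proof -
  let ?R = "expansion_rem q a"
  define S where "S = (SUP m. ?R m)"
  have "bdd_above (range ?R)"
    using expansion_rem_le[OF q _ s] a unfolding shift_maximal_def by (intro bdd_aboveI2) blast
  then have bound: "?R m \<le> S" for m
    unfolding S_def by (rule cSUP_upper[OF UNIV_I])
  have "S \<le> 1 + (S - 1) / q"
    unfolding S_def using shift_maximal_rem_step[OF q a s bound, folded S_def]
    by (intro cSUP_least) (auto simp: S_def)
  then have "(S - 1) * (q - 1) \<le> 0"
    using q by (simp add: field_simps)
  then have "S \<le> 1"
    using q by (simp add: mult_le_0_iff)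
  with bound show ?thesis
    by (meson order_trans)
qed

lemma alpha_eq_of_sums:
  assumes q: "1 < q" "q \<le> real M + 1" and a: "shift_maximal M a"
    and nz: "\<exists>\<^sub>F i in sequentially. a i \<noteq> 0" and s: "(\<lambda>i. a i / q ^ Suc i) sums 1"
  shows "alpha M q = a"
proof (rule lex.order.antisym)
  have qg: "is_qg_exp M q a"
    using a nz s unfolding is_qg_exp_iff shift_maximal_def by blast
  show "lex_le a (alpha M q)"
    unfolding alpha_eq_qgreedy[OF q] using qg is_qg_exp_rem_pos[OF qg q(1)]
    unfolding is_qg_exp_def by (blast intro: lex_le_qgreedy[OF q])
  show "lex_le (alpha M q) a"
  proof (rule ccontr)
    let ?d = "qgreedy M q"
    assume "\<not> lex_le (alpha M q) a"
    then have "lex_less a ?d"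
      by (simp add: alpha_eq_qgreedy[OF q])
    then obtain n where agree: "\<And>i. i < n \<Longrightarrow> a i = ?d i" and less: "a n < ?d n"
      by (elim lex_lessE) blast
    have "expansion_rem q ?d (Suc n) = q * expansion_rem q a n - ?d n"
      using q agree expansion_rem_cong[of n a ?d q] by (simp add: expansion_rem_Suc)
    also have "\<dots> \<le> expansion_rem q a (Suc n) - 1"
      using q less by (simp add: expansion_rem_Suc)
    also have "\<dots> \<le> 0"
      using shift_maximal_rem_le_one[OF q(1) a s] by simp
    finally show False
      using qgreedy_rem_pos[OF q, of "Suc n"] by simp
  qed
qed

lemma summable_expansion:
  assumes "a \<in> seqs M" "1 < q"
  shows "summable (\<lambda>i. a i / q ^ Suc i)"
proof (rule summable_comparison_test)
  show "\<exists>N. \<forall>i\<ge>N. norm (a i / q ^ Suc i) \<le> M / q ^ Suc i"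
    using assms by (auto intro!: divide_right_mono simp: seqsD)
  show "summable (\<lambda>i. M / q ^ Suc i)"
    using power_Suc_sums[OF assms(2)] by (rule sums_summable)
qed

(* The value is x^-1 P(x^-1) for a power series P with radius of convergence at least 1. *)
lemma isCont_expansion_value:
  assumes a: "a \<in> seqs M" and q: "1 < q"
  shows "isCont (\<lambda>x. \<Sum>i. a i / x ^ Suc i) q"
proof -
  define P where "P x = (\<Sum>i. a i * x ^ i)" for x :: real
  have summable_P: "summable (\<lambda>i. a i * x ^ i)" if "0 \<le> x" "x < 1" for x :: real
  proof (rule summable_comparison_test)
    show "\<exists>N. \<forall>i\<ge>N. norm (a i * x ^ i) \<le> M * x ^ i"
      using a that by (auto intro!: mult_right_mono simp: seqsD)
    show "summable (\<lambda>i. M * x ^ i)"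
      using that by (intro summable_mult summable_geometric) simp
  qed
  define K where "K = (1 + 1 / q) / 2"
  have K: "0 \<le> K" "K < 1" "1 / q < K"
    using q unfolding K_def by (auto simp: field_simps)
  have "isCont P (1 / q)"
    unfolding P_def by (rule isCont_powser[OF summable_P[OF K(1,2)]]) (use K q in simp)
  moreover have inverse: "isCont (\<lambda>x. 1 / x) q"
    using q by (intro continuous_intros) auto
  ultimately have "isCont (\<lambda>x. P (1 / x)) q"
    using isCont_o2 by blast
  with inverse have "isCont (\<lambda>x. 1 / x * P (1 / x)) q"
    by (intro isCont_mult)
  moreover have "1 / x * P (1 / x) = (\<Sum>i. a i / x ^ Suc i)" if "1 < x" for x
  proof -
    have "(\<lambda>i. 1 / x * (a i * (1 / x) ^ i)) sums (1 / x * P (1 / x))"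
      unfolding P_def using summable_P[of "1 / x"] that by (intro sums_mult summable_sums) simp
    then show ?thesis
      by (simp add: sums_iff power_one_over)
  qed
  then have "\<forall>\<^sub>F x in nhds q. 1 / x * P (1 / x) = (\<Sum>i. a i / x ^ Suc i)"
    using eventually_nhds_in_open[of "{1<..}" q] q by (auto elim!: eventually_mono)
  ultimately show ?thesis
    using isCont_cong[where f = "\<lambda>x. 1 / x * P (1 / x)" and g = "\<lambda>x. \<Sum>i. a i / x ^ Suc i"]
    by blast
qed

lemma expansion_value_le:
  assumes "a \<in> seqs M" "1 < q"
  shows "(\<Sum>i. a i / q ^ Suc i) \<le> M / (q - 1)"
  using assms seqsD[OF assms(1)]
  by (intro sums_le[OF _ summable_sums[OF summable_expansion] power_Suc_sums] divide_right_mono) auto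

lemma exists_expansion_value_ge_one:
  assumes a: "a \<in> seqs M" and a0: "0 < a 0" and p: "0 < p" "a p \<noteq> 0"
  obtains q0 where "1 < q0" "q0 \<le> 2" "1 \<le> (\<Sum>i. a i / q0 ^ Suc i)"
proof -
  let ?q0 = "root (Suc p) 2"
  have q0: "1 < ?q0" and pow: "?q0 ^ Suc p = 2"
    by (simp, rule real_root_pow_pos2) auto
  then have "?q0 \<le> 2"
    using self_le_power[of ?q0 "Suc p"] by simp
  have "1 / 2 + 1 / 2 \<le> a 0 / ?q0 + a p / ?q0 ^ Suc p"
    using a0 p q0 pow \<open>?q0 \<le> 2\<close> by (intro add_mono) (auto simp: field_simps)
  also have "\<dots> = (\<Sum>i\<in>{0, p}. a i / ?q0 ^ Suc i)"
    using p by simp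
  also have "\<dots> \<le> (\<Sum>i. a i / ?q0 ^ Suc i)"
    using q0 by (intro sum_le_suminf summable_expansion[OF a]) auto
  finally have "1 \<le> (\<Sum>i. a i / ?q0 ^ Suc i)"
    by simp
  with q0 \<open>?q0 \<le> 2\<close> show ?thesis
    by (rule that)
qed

lemma exists_alpha_eq:
  assumes M: "1 \<le> M" and a: "shift_maximal M a"
    and nz: "\<exists>\<^sub>F i in sequentially. a i \<noteq> 0" and a0: "0 < a 0"
  shows "\<exists>q. 1 < q \<and> q \<le> real M + 1 \<and> alpha M q = a"
proof -
  define f where "f x = (\<Sum>i. a i / x ^ Suc i)" for x :: real
  have seqs: "a \<in> seqs M"
    using a unfolding shift_maximal_def by blast
  obtain p where p: "0 < p" "a p \<noteq> 0"
    using nz unfolding frequently_sequentially by (metis Suc_le_eq)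
  obtain q0 where q0: "1 < q0" "q0 \<le> 2" "1 \<le> f q0"
    unfolding f_def using exists_expansion_value_ge_one[OF seqs a0 p] by blast
  have "\<exists>x. q0 \<le> x \<and> x \<le> real M + 1 \<and> f x = 1"
  proof (rule IVT2'[of f])
    show "f (real M + 1) \<le> 1"
      unfolding f_def using expansion_value_le[OF seqs, of "real M + 1"] M by simp
    show "q0 \<le> real M + 1"
      using q0 M by simp
    show "continuous_on {q0..real M + 1} f"
      unfolding f_def using isCont_expansion_value[OF seqs] q0(1)
      by (intro continuous_at_imp_continuous_on) auto
  qed (use q0 in auto)
  then obtain q where "q0 \<le> q" "q \<le> real M + 1" "f q = 1"
    by blast
  with q0(1) have q: "1 < q" "q \<le> real M + 1" "f q = 1"
    by simp_all
  then have "alpha M q = a"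
    unfolding f_def using alpha_eq_of_sums[OF q(1,2) a nz] summable_expansion[OF seqs q(1)]
    by (simp add: sums_iff)
  with q show ?thesis
    by blast
qed

lemma the_base_of_expansion:
  assumes "1 \<le> M" "shift_maximal M a" "\<exists>\<^sub>F i in sequentially. a i \<noteq> 0" "0 < a 0"
  defines "Q \<equiv> THE q. 1 < q \<and> q \<le> real M + 1 \<and> alpha M q = a"
  shows "1 < Q \<and> Q \<le> real M + 1 \<and> alpha M Q = a"
  unfolding Q_def
proof (rule theI')
  show "\<exists>!q. 1 < q \<and> q \<le> real M + 1 \<and> alpha M q = a"
    using exists_alpha_eq[OF assms(1-4)] alpha_less_iff by (metis lex.less_irrefl linorder_neqE_linordered_idom)
qed

lemma qG_spec:
  assumes "1 \<le> M"
  shows "1 < qG M \<and> qG M \<le> real M + 1 \<and> alpha M (qG M) = qG_expansion M"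
  unfolding qG_def qG_expansion_eq
  using assms shift_maximal_qG_expansion qG_expansion_frequently_nonzero
  by (intro the_base_of_expansion) (auto simp: qG_expansion_apply)

lemma qL_spec:
  assumes "1 \<le> M" and b: "b \<in> fundamental M"
  shows "1 < qL M b \<and> qL M b \<le> real M + 1 \<and> alpha M (qL M b) = per b"
  unfolding qL_def
proof (rule the_base_of_expansion[OF assms(1)])
  show "shift_maximal M (per b)"
    using per_fundamental_in_V[OF b] by (simp add: V_iff_shift_maximal)
  show "\<exists>\<^sub>F i in sequentially. per b i \<noteq> 0"
    using b by (rule per_fundamental_frequently_nonzero)
  show "0 < per b 0"
    using fundamental_first_pos[OF b] fundamental_not_Nil[OF b] by (simp add: per_nth)
qed

lemma qR_spec:
  assumes "1 \<le> M" and b: "b \<in> fundamental M"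
  shows "1 < qR M b \<and> qR M b \<le> real M + 1 \<and> alpha M (qR M b) = qR_expansion M b"
  unfolding qR_def qR_expansion_def[symmetric]
proof (rule the_base_of_expansion[OF assms(1)])
  show "shift_maximal M (qR_expansion M b)"
    unfolding shift_maximal_def using qR_expansion_in_seqs[OF b] shift_qR_expansion_le[OF b] by blast
  show "\<exists>\<^sub>F i in sequentially. qR_expansion M b i \<noteq> 0"
    using b by (rule qR_expansion_frequently_nonzero)
  have "length b = 1 \<or> 1 < length b"
    using fundamental_not_Nil[OF b] by (cases b) auto
  then have "b ! 0 \<le> qR_expansion M b 0"
    using qR_expansion_eq_per[of 0 b M] qR_expansion_last[OF fundamental_not_Nil[OF b], of M]
    by (auto simp: per_def)
  then show "0 < qR_expansion M b 0"
    using fundamental_first_pos[OF b] by simp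
qed

theorem lemma2p18:
  fixes M :: nat and q :: real
  assumes "M \<ge> 1" and "qG M \<le> q" and "q \<le> real M + 1"
  shows "irreducible_seq M (alpha M q) \<longleftrightarrow>
           (\<forall>b \<in> fundamental M. \<not> (qL M b < q \<and> q \<le> qR M b))"
proof -
  note G = qG_spec[OF assms(1)]
  have q: "1 < q" "q \<le> real M + 1"
    using G assms(2,3) by simp_all
  have "lex_le (qG_expansion M) (alpha M q)"
    using alpha_le_iff[of "qG M" M q] G q assms(2) by simp
  then have "irreducible_seq M (alpha M q) \<longleftrightarrow> (\<forall>b\<in>fundamental M.
      \<not> (lex_less (per b) (alpha M q) \<and> lex_le (alpha M q) (qR_expansion M b)))"
    using irreducible_iff_no_fundamental_interval shift_maximal_alpha[OF q] by blast
  moreover have "lex_less (per b) (alpha M q) \<longleftrightarrow> qL M b < q"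
    and "lex_le (alpha M q) (qR_expansion M b) \<longleftrightarrow> q \<le> qR M b"
    if "b \<in> fundamental M" for b
    using alpha_less_iff[of "qL M b" M q] alpha_le_iff[of q M "qR M b"] q
      qL_spec[OF assms(1) that] qR_spec[OF assms(1) that] by simp_all
  ultimately show ?thesis
    by simp
qed

end
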